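(* Let $s_0\in(0,1)$, $\tau,\eta,\lambda>0$, and let $(I_j^0)_{j\in\mathbb{Z}}$ be a finitely supported sequence with $I_j^0\in[0,1)$ for all $j$ and $I_j^0>0$ for at least one $j$. Let $f(v):=s_0(1-e^{-\tau v})-\eta v$, $\mathscr{R}_0:=s_0\tau/\eta$, and assume $\mathscr{R}_0>1$. Define $$c_*:=\min_{\gamma>0}\frac{\eta(\mathscr{R}_0-1)+\lambda(e^{-\gamma}-2+e^{\gamma})}{\gamma}>0.$$ Let $(\mathcal{I}_j^\infty)_{j\in\mathbb{Z}}$ be the unique positive bounded solution of $0=f(\mathcal{I}_j)+I_j^0+\lambda(\mathcal{I}_{j-1}-2\mathcal{I}_j+\mathcal{I}_{j+1})$, $j\in\mathbb{Z}$, and let $(\mathcal{I}_j(t))_{j\in\mathbb{Z}}$ solve $$\mathcal{I}_j'(t)=f(\mathcal{I}_j(t))+I_j^0+\lambda\left(\mathcal{I}_{j-1}(t)-2\mathcal{I}_j(t)+\mathcal{I}_{j+1}(t)\right),\quad j\in\mathbb{Z},\ t>0,\qquad \mathcal{I}_j(0)=0\ \ \forall j\in\mathbb{Z}.$$ Then: (i) for every $c\in(0,c_* )$, $\limsup_{t\to+\infty}\sup_{|j|\le ct}|\mathcal{I}_j(t)-\mathcal{I}_j^\infty|=0$; (ii) for every $c>c_*$, $\limsup_{t\to+\infty}\sup_{|j|\ge ct}|\mathcal{I}_j(t)|=0$. *)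

theory Defs
  imports "HOL-Analysis.Analysis"
begin

definition epi_f :: "real \<Rightarrow> real \<Rightarrow> real \<Rightarrow> real \<Rightarrow> real" where
  "epi_f s0 \<tau> \<eta> v = s0 * (1 - exp (- \<tau> * v)) - \<eta> * v"

definition R0 :: "real \<Rightarrow> real \<Rightarrow> real \<Rightarrow> real" where
  "R0 s0 \<tau> \<eta> = s0 * \<tau> / \<eta>"

text \<open>Spreading speed c_* = min over gamma > 0 (the minimum is attained; we write the infimum).\<close>
definition c_star :: "real \<Rightarrow> real \<Rightarrow> real \<Rightarrow> real \<Rightarrow> real" where
  "c_star s0 \<tau> \<eta> lam =
     (INF \<gamma>\<in>{0<..}. (\<eta> * (R0 s0 \<tau> \<eta> - 1) + lam * (exp (-\<gamma>) - 2 + exp \<gamma>)) / \<gamma>)"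

definition dlap :: "(int \<Rightarrow> real) \<Rightarrow> int \<Rightarrow> real" where
  "dlap u j = u (j - 1) - 2 * u j + u (j + 1)"

end

theory Submission
  imports Defs
begin

text \<open>
  Everything rests on a comparison principle for the lattice equation: on short time steps the
  positive part of the difference of a sub- and a supersolution halves, because \<open>f\<close> is one-sided
  Lipschitz and the coupling is bounded. Comparison with \<open>0\<close>, with the stationary solution \<open>Iinf\<close>
  and with time shifts gives \<open>0 \<le> I t \<le> Iinf\<close>, nondecreasing in \<open>t\<close>.

  Beyond \<open>c\<^sub>*\<close> the profiles \<open>A exp (\<gamma> (c' t - |j|))\<close> with \<open>\<gamma> c' > r + \<lambda> (exp \<gamma> - 2 + exp (- \<gamma>))\<close>,
  \<open>r = f'(0)\<close>, are supersolutions, so \<open>I\<close> decays exponentially on \<open>|j| \<ge> c t\<close>.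

  Below \<open>c\<^sub>*\<close> a hump \<open>\<delta> exp (- a x) sin (b x)\<close> travelling at a speed \<open>c1 > c\<close> is a subsolution for
  suitable \<open>a, b\<close>, and behind it a standing sine hump of linearly growing amplitude lifts \<open>I\<close> above
  any level below the positive zero \<open>v\<^sub>*\<close> of \<open>f\<close>. The monotone limit of \<open>I t\<close> is then a stationary
  solution between \<open>v\<^sub>*\<close> and \<open>Iinf\<close>; at a minimum \<open>m < 1\<close> of its ratio to \<open>Iinf\<close> the strict
  inequality \<open>f (m v) > m f v\<close> is violated, so it equals \<open>Iinf\<close>. As \<open>Iinf \<le> v\<^sub>* + \<epsilon>\<close> far out, \<open>I t\<close>
  is uniformly close to \<open>Iinf\<close> on \<open>|j| \<le> c t\<close>.
\<close>

section \<open>A comparison principle on the lattice\<close>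

lemma last_nonpos_point:
  fixes g :: "real \<Rightarrow> real"
  assumes cont: "continuous_on {s..t} g" and "s \<le> t" and "g s \<le> 0" and "0 < g t"
  obtains u where "s \<le> u" "u < t" "g u \<le> 0" "\<And>v. u < v \<Longrightarrow> v \<le> t \<Longrightarrow> 0 < g v"
proof -
  define A where "A = {s..t} \<inter> g -` {..0}"
  have "A \<noteq> {}" using assms unfolding A_def by auto
  moreover have bdd: "bdd_above A" unfolding A_def by (auto intro: bdd_aboveI[where M = t])
  moreover have "closed A" unfolding A_def
    by (rule continuous_closed_preimage[OF cont]) auto
  ultimately have "Sup A \<in> A" by (rule closed_contains_Sup)
  then have u: "s \<le> Sup A" "Sup A \<le> t" "g (Sup A) \<le> 0" unfolding A_def by auto
  with \<open>0 < g t\<close> have "Sup A < t" by (cases "Sup A = t") auto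
  moreover have "0 < g v" if "Sup A < v" "v \<le> t" for v
  proof (rule ccontr)
    assume "\<not> 0 < g v"
    with that u have "v \<in> A" unfolding A_def by auto
    with bdd have "v \<le> Sup A" by (rule cSup_upper[rotated])
    with that show False by simp
  qed
  ultimately show thesis using u by (intro that) auto
qed

lemma growth_after_nonpos:
  fixes g :: "real \<Rightarrow> real"
  assumes cont: "continuous_on {s..t} g" and st: "s \<le> t" and gs: "g s \<le> 0" and K: "0 \<le> K"
    and der: "\<And>x. s < x \<Longrightarrow> x \<le> t \<Longrightarrow> 0 < g x \<Longrightarrow>
      \<exists>d. (g has_real_derivative d) (at x) \<and> d \<le> K"
  shows "g t \<le> K * (t - s)"
proof (cases "g t \<le> 0")
  case True
  moreover have "0 \<le> K * (t - s)" using K st by simp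
  ultimately show ?thesis by linarith
next
  case False
  then have "0 < g t" by simp
  then obtain u where u: "s \<le> u" "u < t" "g u \<le> 0"
    and pos: "\<And>v. u < v \<Longrightarrow> v \<le> t \<Longrightarrow> 0 < g v"
    using last_nonpos_point[OF cont st gs] by blast
  have "continuous_on {u..t} g" using cont by (rule continuous_on_subset) (use u in auto)
  moreover have "g differentiable at x" if "u < x" "x < t" for x
  proof -
    have "s < x" "x \<le> t" "0 < g x" using that u pos[of x] by auto
    then obtain d where "(g has_real_derivative d) (at x)" using der by blast
    then show ?thesis using real_differentiable_def by blast
  qed
  ultimately obtain l z where z: "u < z" "z < t" "(g has_real_derivative l) (at z)"
    and mvt: "g t - g u = (t - u) * l"
    using MVT[OF \<open>u < t\<close>] by blast
  obtain d where "(g has_real_derivative d) (at z)" "d \<le> K"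
    using der[of z] pos[of z] z u by auto
  with z(3) have "l \<le> K" using DERIV_unique by blast
  have "g t \<le> (t - u) * l" using mvt u(3) by linarith
  also have "\<dots> \<le> (t - u) * K" using \<open>l \<le> K\<close> u by (intro mult_left_mono) auto
  also have "\<dots> \<le> (t - s) * K" using K u by (intro mult_right_mono) auto
  finally show ?thesis by (simp add: mult.commute)
qed

text \<open>
  If \<open>w \<le> 0\<close> at the start of a time step of length \<open>h\<close> with \<open>2 h (L + 2 \<mu> + 1) \<le> 1\<close>, any bound
  \<open>S \<ge> 0\<close> of \<open>w\<close> on the step improves to \<open>S / 2\<close>; iterating from \<open>M\<close> gives \<open>w \<le> 0\<close> on the step.
\<close>
context
  fixes w :: "real \<Rightarrow> int \<Rightarrow> real" and L \<mu> M ta tb :: real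
  assumes L: "0 \<le> L" and \<mu>: "0 \<le> \<mu>"
    and cont: "\<And>j. continuous_on {ta..tb} (\<lambda>t. w t j)"
    and bdd: "\<And>j t. ta \<le> t \<Longrightarrow> t \<le> tb \<Longrightarrow> w t j \<le> M"
    and der: "\<And>j t. ta < t \<Longrightarrow> t \<le> tb \<Longrightarrow> 0 < w t j \<Longrightarrow>
      \<exists>d. ((\<lambda>s. w s j) has_real_derivative d) (at t) \<and>
          d \<le> L * w t j + \<mu> * (max 0 (w t (j - 1)) + max 0 (w t (j + 1)))"
begin

lemma lattice_bound_halves:
  assumes s: "ta \<le> s" "s' \<le> tb" "s' - s \<le> 1 / (2 * (L + 2 * \<mu> + 1))"
    and ws: "\<And>j. w s j \<le> 0"
    and S: "0 \<le> S" "\<And>j t. s \<le> t \<Longrightarrow> t \<le> s' \<Longrightarrow> w t j \<le> S"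
    and t: "s \<le> t" "t \<le> s'"
  shows "w t j \<le> S / 2"
proof -
  define C where "C = L + 2 * \<mu> + 1"
  have C: "1 \<le> C" using L \<mu> unfolding C_def by simp
  have "w t j \<le> C * S * (t - s)"
  proof (rule growth_after_nonpos[where g = "\<lambda>t. w t j"])
    show "continuous_on {s..t} (\<lambda>t. w t j)"
      using cont by (rule continuous_on_subset) (use s t in auto)
    show "s \<le> t" "w s j \<le> 0" "0 \<le> C * S" using t ws S C by auto
    fix x assume x: "s < x" "x \<le> t" "0 < w x j"
    then obtain d where d: "((\<lambda>s. w s j) has_real_derivative d) (at x)"
      "d \<le> L * w x j + \<mu> * (max 0 (w x (j - 1)) + max 0 (w x (j + 1)))"
      using der[of x j] s t by auto
    have "w x j \<le> S" "max 0 (w x (j - 1)) \<le> S" "max 0 (w x (j + 1)) \<le> S"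
      using S x t by auto
    then have "L * w x j + \<mu> * (max 0 (w x (j - 1)) + max 0 (w x (j + 1))) \<le> L * S + \<mu> * (S + S)"
      using L \<mu> by (intro add_mono mult_left_mono) auto
    also have "\<dots> \<le> C * S" using S unfolding C_def by (simp add: algebra_simps)
    finally show "\<exists>d. ((\<lambda>s. w s j) has_real_derivative d) (at x) \<and> d \<le> C * S"
      using d by auto
  qed
  also have "\<dots> \<le> C * S * (1 / (2 * C))"
    using s t S C unfolding C_def by (intro mult_left_mono) auto
  also have "\<dots> = S / 2" using C by simp
  finally show ?thesis .
qed

lemma lattice_nonpos_step:
  assumes s: "ta \<le> s" "s \<le> tb" and ws: "\<And>j. w s j \<le> 0"
    and t: "s \<le> t" "t \<le> min tb (s + 1 / (2 * (L + 2 * \<mu> + 1)))"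
  shows "w t j \<le> 0"
proof -
  define s' where "s' = min tb (s + 1 / (2 * (L + 2 * \<mu> + 1)))"
  define M' where "M' = max M 0"
  have "\<forall>k t. s \<le> t \<longrightarrow> t \<le> s' \<longrightarrow> w t k \<le> M' / 2 ^ n" for n
  proof (induction n)
    case 0
    have "w t k \<le> M'" if "s \<le> t" "t \<le> s'" for k t
      using bdd[of t k] that s unfolding s'_def M'_def by simp
    then show ?case by simp
  next
    case (Suc n)
    have "w t k \<le> M' / 2 ^ n / 2" if "s \<le> t" "t \<le> s'" for k t
      by (rule lattice_bound_halves[where s = s and s' = s'])
        (use s ws Suc that in \<open>auto simp: s'_def M'_def\<close>)
    then show ?case by (simp add: mult.commute)
  qed
  then have "\<forall>n\<ge>0. w t j \<le> M' / 2 ^ n" using t unfolding s'_def by blast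
  then show ?thesis
    by (intro LIMSEQ_le_const[OF LIMSEQ_divide_realpow_zero[of 2 M']]) auto
qed

lemma lattice_nonpos:
  assumes init: "\<And>j. w ta j \<le> 0" and t: "ta \<le> t" "t \<le> tb"
  shows "w t j \<le> 0"
proof -
  define h where "h = 1 / (2 * (L + 2 * \<mu> + 1))"
  have h: "0 < h" using L \<mu> unfolding h_def by simp
  have "\<forall>j t. ta \<le> t \<and> t \<le> min tb (ta + real n * h) \<longrightarrow> w t j \<le> 0" for n
  proof (induction n)
    case 0
    then show ?case using init by auto
  next
    case (Suc n)
    define s where "s = min tb (ta + real n * h)"
    have s: "ta \<le> s" "s \<le> tb" using t h unfolding s_def by auto
    have IH: "w t j \<le> 0" if "ta \<le> t" "t \<le> s" for t j using Suc that unfolding s_def by blast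
    have step: "w t j \<le> 0" if "s \<le> t" "t \<le> min tb (s + h)" for t j
      using lattice_nonpos_step[OF s IH[OF s(1) order_refl]] that unfolding h_def by blast
    have "min tb (s + h) = min tb (ta + real (Suc n) * h)"
      using h unfolding s_def by (auto simp: min_def algebra_simps)
    then show ?case using IH step by (metis linorder_le_cases)
  qed
  moreover obtain n where "(tb - ta) / h < real n" using reals_Archimedean2 by blast
  then have "t \<le> min tb (ta + real n * h)" using t h by (simp add: field_simps)
  ultimately show ?thesis using t by blast
qed

end

lemma lattice_comparison:
  fixes u v :: "real \<Rightarrow> int \<Rightarrow> real" and g :: "real \<Rightarrow> real" and a :: "int \<Rightarrow> real"
  assumes L: "0 \<le> L" and lam: "0 \<le> lam"
    and cu: "\<And>j. continuous_on {ta..tb} (\<lambda>t. u t j)"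
    and cv: "\<And>j. continuous_on {ta..tb} (\<lambda>t. v t j)"
    and init: "\<And>j. u ta j \<le> v ta j"
    and bdd: "\<And>j t. ta \<le> t \<Longrightarrow> t \<le> tb \<Longrightarrow> u t j - v t j \<le> M"
    and lip: "\<And>j t. ta < t \<Longrightarrow> t \<le> tb \<Longrightarrow> v t j < u t j \<Longrightarrow>
      g (u t j) - g (v t j) \<le> L * (u t j - v t j)"
    and sub: "\<And>j t. ta < t \<Longrightarrow> t \<le> tb \<Longrightarrow> v t j < u t j \<Longrightarrow>
      \<exists>d. ((\<lambda>s. u s j) has_real_derivative d) (at t) \<and> d \<le> g (u t j) + a j + lam * dlap (u t) j"
    and super: "\<And>j t. ta < t \<Longrightarrow> t \<le> tb \<Longrightarrow> v t j < u t j \<Longrightarrow>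
      \<exists>d. ((\<lambda>s. v s j) has_real_derivative d) (at t) \<and> g (v t j) + a j + lam * dlap (v t) j \<le> d"
    and t: "ta \<le> t" "t \<le> tb"
  shows "u t j \<le> v t j"
proof -
  have "u t j - v t j \<le> 0"
  proof (rule lattice_nonpos[where w = "\<lambda>t j. u t j - v t j", OF L lam _ bdd _ _ t])
    show "continuous_on {ta..tb} (\<lambda>t. u t j - v t j)" for j
      using cu cv by (intro continuous_intros)
    show "u ta j - v ta j \<le> 0" for j using init[of j] by simp
    fix j s assume s: "ta < s" "s \<le> tb" "0 < u s j - v s j"
    obtain du dv where du: "((\<lambda>s. u s j) has_real_derivative du) (at s)"
        "du \<le> g (u s j) + a j + lam * dlap (u s) j"
      and dv: "((\<lambda>s. v s j) has_real_derivative dv) (at s)"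
        "g (v s j) + a j + lam * dlap (v s) j \<le> dv"
      using sub[of s j] super[of s j] s by auto
    have "lam * ((u s (j - 1) - v s (j - 1)) + (u s (j + 1) - v s (j + 1)))
        \<le> lam * (max 0 (u s (j - 1) - v s (j - 1)) + max 0 (u s (j + 1) - v s (j + 1)))"
      using lam by (intro mult_left_mono) auto
    moreover have "0 \<le> lam * (u s j - v s j)" using lam s by simp
    moreover have "du - dv \<le> (g (u s j) - g (v s j))
        + lam * ((u s (j - 1) - v s (j - 1)) + (u s (j + 1) - v s (j + 1))) - 2 * (lam * (u s j - v s j))"
      using du(2) dv(2) unfolding dlap_def by (simp add: algebra_simps)
    ultimately have "du - dv \<le> L * (u s j - v s j)
        + lam * (max 0 (u s (j - 1) - v s (j - 1)) + max 0 (u s (j + 1) - v s (j + 1)))"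
      using lip[of s j] s by linarith
    then show "\<exists>d. ((\<lambda>s. u s j - v s j) has_real_derivative d) (at s) \<and>
        d \<le> L * (u s j - v s j)
          + lam * (max 0 (u s (j - 1) - v s (j - 1)) + max 0 (u s (j + 1) - v s (j + 1)))"
      using DERIV_diff[OF du(1) dv(1)] by blast
  qed
  then show ?thesis by simp
qed

lemma dlap_reflect: "dlap (\<lambda>j. u (- j)) j = dlap u (- j)"
proof -
  have e: "- (j - 1) = - j + 1" "- (j + 1) = - j - 1" by arith+
  show ?thesis unfolding dlap_def e by linarith
qed

section \<open>The reaction term\<close>

lemma add_one_less_exp:
  fixes x :: real
  assumes "x \<noteq> 0"
  shows "1 + x < exp x"
proof (cases "1 + x / 2 < 0")
  case True
  then show ?thesis using exp_gt_zero[of x] by linarith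
next
  case False
  have "(1 + x / 2) ^ 2 \<le> exp (x / 2) ^ 2"
    using False exp_ge_add_one_self[of "x / 2"] by (intro power_mono) auto
  also have "exp (x / 2) ^ 2 = exp x" by (simp add: exp_double[symmetric])
  finally have "1 + x + x ^ 2 / 4 \<le> exp x" by (simp add: power2_eq_square field_simps)
  moreover have "0 < x ^ 2 / 4" using assms by simp
  ultimately show ?thesis by linarith
qed

lemma exp_minus_convex_strict:
  fixes x \<theta> :: real
  assumes "0 < \<theta>" "\<theta> < 1" "0 < x"
  shows "exp (- \<theta> * x) < \<theta> * exp (- x) + (1 - \<theta>)"
proof -
  txt \<open>The tangent of \<open>exp\<close> at \<open>p\<close> lies strictly below \<open>exp\<close> at \<open>- x\<close> and at \<open>0\<close>.\<close>
  define p where "p = - \<theta> * x"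
  have p: "p \<noteq> 0" "- x - p \<noteq> 0" using assms unfolding p_def by auto
  have "exp p * (1 + (- x - p)) < exp p * exp (- x - p)"
    using add_one_less_exp[OF p(2)] by (intro mult_strict_left_mono) auto
  also have "\<dots> = exp (- x)" by (simp add: exp_add[symmetric])
  finally have a: "exp p * (1 + (- x - p)) < exp (- x)" .
  have "exp p * (1 + (0 - p)) < exp p * exp (0 - p)"
    using add_one_less_exp[of "- p"] p(1) by (intro mult_strict_left_mono) auto
  also have "\<dots> = 1" by (simp add: exp_add[symmetric])
  finally have b: "exp p * (1 + (0 - p)) < 1" .
  have "\<theta> * (exp p * (1 + (- x - p))) + (1 - \<theta>) * (exp p * (1 + (0 - p)))
      < \<theta> * exp (- x) + (1 - \<theta>) * 1"
    using a b assms by (intro add_strict_mono mult_strict_left_mono) auto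
  moreover have "\<theta> * (exp p * (1 + (- x - p))) + (1 - \<theta>) * (exp p * (1 + (0 - p))) = exp p"
    unfolding p_def by (simp add: algebra_simps)
  ultimately show ?thesis unfolding p_def by simp
qed

lemma exp_minus_le_quadratic:
  fixes x :: real
  assumes "0 \<le> x"
  shows "exp (- x) \<le> 1 - x + x ^ 2 / 2"
proof -
  have "(\<lambda>x. 1 - x + x ^ 2 / 2 - exp (- x)) 0 \<le> (\<lambda>x. 1 - x + x ^ 2 / 2 - exp (- x)) x"
  proof (rule DERIV_nonneg_imp_nondecreasing[OF assms])
    fix y :: real assume "0 \<le> y" "y \<le> x"
    have "DERIV (\<lambda>x. 1 - x + x ^ 2 / 2 - exp (- x)) y :> - 1 + y + exp (- y)"
      by (auto intro!: derivative_eq_intros)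
    moreover have "0 \<le> - 1 + y + exp (- y)" using exp_ge_add_one_self[of "- y"] by linarith
    ultimately show "\<exists>d. DERIV (\<lambda>x. 1 - x + x ^ 2 / 2 - exp (- x)) y :> d \<and> 0 \<le> d" by blast
  qed
  then show ?thesis by simp
qed

locale epidemic_reaction =
  fixes s0 \<tau> \<eta> :: real
  assumes s0_pos: "0 < s0" and \<tau>_pos: "0 < \<tau>" and \<eta>_pos: "0 < \<eta>"
    and R0_gt_1: "1 < R0 s0 \<tau> \<eta>"
begin

abbreviation f :: "real \<Rightarrow> real" where "f \<equiv> epi_f s0 \<tau> \<eta>"

definition r :: real where "r = s0 * \<tau> - \<eta>"

lemma r_pos: "0 < r"
proof -
  have "1 < s0 * \<tau> / \<eta>" using R0_gt_1 unfolding R0_def .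
  then show ?thesis using \<eta>_pos unfolding r_def by (simp add: field_simps)
qed

lemma eta_R0_minus_1: "\<eta> * (R0 s0 \<tau> \<eta> - 1) = r"
  unfolding R0_def r_def using \<eta>_pos by (simp add: field_simps)

lemma f_0 [simp]: "f 0 = 0"
  unfolding epi_f_def by simp

lemma isCont_f: "isCont f v"
  unfolding epi_f_def by (intro continuous_intros)

lemma f_diff_le:
  assumes "0 \<le> b" "b \<le> a"
  shows "f a - f b \<le> r * (a - b)"
proof -
  have e: "exp (- \<tau> * a) = exp (- \<tau> * b) * exp (- (\<tau> * (a - b)))"
    by (simp add: exp_add[symmetric] algebra_simps)
  have "exp (- \<tau> * b) - exp (- \<tau> * a) = exp (- \<tau> * b) * (1 - exp (- (\<tau> * (a - b))))"
    unfolding e by (simp add: algebra_simps)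
  also have "\<dots> \<le> 1 * (\<tau> * (a - b))"
    using assms \<tau>_pos exp_ge_add_one_self[of "- (\<tau> * (a - b))"] by (intro mult_mono) auto
  finally have "s0 * (exp (- \<tau> * b) - exp (- \<tau> * a)) \<le> s0 * (\<tau> * (a - b))"
    using s0_pos by (intro mult_left_mono) auto
  then show ?thesis unfolding epi_f_def r_def by (simp add: algebra_simps)
qed

lemma f_ge_minus_eta:
  assumes "0 \<le> v"
  shows "- \<eta> * v \<le> f v"
proof -
  have "exp (- \<tau> * v) \<le> 1" using assms \<tau>_pos by simp
  then have "0 \<le> s0 * (1 - exp (- \<tau> * v))" using s0_pos by simp
  then show ?thesis unfolding epi_f_def by simp
qed

lemma f_neg_lipschitz:
  assumes "v \<le> 0" "- B \<le> v"
  shows "- f v \<le> s0 * \<tau> * exp (\<tau> * B) * (- v)"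
proof -
  define x where "x = - \<tau> * v"
  have x: "0 \<le> x" "x \<le> \<tau> * B"
    using assms \<tau>_pos mult_left_mono[of "- v" B \<tau>] mult_nonneg_nonpos[of \<tau> v]
    unfolding x_def by auto
  have "exp x * (1 - x) \<le> exp x * exp (- x)"
    using exp_ge_add_one_self[of "- x"] by (intro mult_left_mono) auto
  then have "exp x - 1 \<le> x * exp x" by (simp add: exp_minus algebra_simps)
  also have "\<dots> \<le> x * exp (\<tau> * B)" using x by (intro mult_left_mono) auto
  finally have "s0 * (exp x - 1) \<le> s0 * (x * exp (\<tau> * B))"
    using s0_pos by (intro mult_left_mono) auto
  moreover have "- f v = s0 * (exp x - 1) + \<eta> * v"
    unfolding epi_f_def x_def by (simp add: algebra_simps)
  moreover have "\<eta> * v \<le> 0" using assms \<eta>_pos by (simp add: mult_nonneg_nonpos)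
  ultimately show ?thesis unfolding x_def by (simp add: algebra_simps)
qed

lemma f_ge_quadratic:
  assumes "0 \<le> v"
  shows "r * v - s0 * \<tau> ^ 2 * v ^ 2 / 2 \<le> f v"
proof -
  have "exp (- (\<tau> * v)) \<le> 1 - \<tau> * v + (\<tau> * v) ^ 2 / 2"
    using exp_minus_le_quadratic[of "\<tau> * v"] assms \<tau>_pos by simp
  then have "s0 * (\<tau> * v - (\<tau> * v) ^ 2 / 2) \<le> s0 * (1 - exp (- (\<tau> * v)))"
    using s0_pos by (intro mult_left_mono) auto
  then show ?thesis unfolding epi_f_def r_def by (simp add: algebra_simps power2_eq_square)
qed

lemma f_ge_linear_near_0:
  assumes "r' < r"
  obtains \<delta> where "0 < \<delta>" "\<And>v. 0 \<le> v \<Longrightarrow> v \<le> \<delta> \<Longrightarrow> r' * v \<le> f v"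
proof
  define \<delta> where "\<delta> = (r - r') / (s0 * \<tau> ^ 2)"
  show "0 < \<delta>" using assms s0_pos \<tau>_pos unfolding \<delta>_def by simp
  fix v assume v: "0 \<le> v" "v \<le> \<delta>"
  have "v ^ 2 \<le> \<delta> * v" using v by (simp add: power2_eq_square mult_right_mono)
  moreover have "0 \<le> \<delta> * v" using v by simp
  ultimately have "v ^ 2 / 2 \<le> \<delta> * v" by linarith
  then have "s0 * \<tau> ^ 2 * (v ^ 2 / 2) \<le> s0 * \<tau> ^ 2 * (\<delta> * v)"
    using v s0_pos \<tau>_pos by (intro mult_left_mono) auto
  also have "\<dots> = (r - r') * v" unfolding \<delta>_def using s0_pos \<tau>_pos by (simp add: field_simps)
  finally show "r' * v \<le> f v" using f_ge_quadratic[OF v(1)] by (simp add: algebra_simps)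
qed

lemma f_mult_gt:
  assumes "0 < \<theta>" "\<theta> < 1" "0 < v"
  shows "\<theta> * f v < f (\<theta> * v)"
proof -
  have "exp (- \<theta> * (\<tau> * v)) < \<theta> * exp (- (\<tau> * v)) + (1 - \<theta>)"
    using exp_minus_convex_strict[of \<theta> "\<tau> * v"] assms \<tau>_pos by simp
  then have "s0 * (\<theta> * (1 - exp (- (\<tau> * v)))) < s0 * (1 - exp (- \<theta> * (\<tau> * v)))"
    using s0_pos by (intro mult_strict_left_mono) (auto simp: algebra_simps)
  then show ?thesis unfolding epi_f_def by (simp add: algebra_simps)
qed

lemma f_mult_ge:
  assumes "0 \<le> \<theta>" "\<theta> \<le> 1" "0 \<le> v"
  shows "\<theta> * f v \<le> f (\<theta> * v)"
  using assms f_mult_gt[of \<theta> v] by (cases "\<theta> = 0 \<or> \<theta> = 1 \<or> v = 0") auto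

lemma f_ratio_strict_antimono:
  assumes "0 < y" "y < z"
  shows "f z / z < f y / y"
proof -
  have "(y / z) * f z < f ((y / z) * z)" using assms by (intro f_mult_gt) auto
  then show ?thesis using assms by (simp add: field_simps)
qed

lemma f_ratio_antimono:
  assumes "0 < y" "y \<le> z"
  shows "f z / z \<le> f y / y"
  using f_ratio_strict_antimono[of y z] assms by (cases "y = z") auto

lemma ex_pos_zero_f: "\<exists>v. 0 < v \<and> f v = 0"
proof -
  obtain \<delta> where \<delta>: "0 < \<delta>" "\<And>v. 0 \<le> v \<Longrightarrow> v \<le> \<delta> \<Longrightarrow> r / 2 * v \<le> f v"
    using f_ge_linear_near_0[of "r / 2"] r_pos by auto
  have "0 < r / 2 * \<delta>" using r_pos \<delta> by simp
  also have "\<dots> \<le> f \<delta>" using \<delta> by simp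
  finally have "0 < f \<delta>" .
  define B where "B = max (2 * \<delta>) (2 * s0 / \<eta>)"
  have "s0 < \<eta> * (2 * s0 / \<eta>)" using s0_pos \<eta>_pos by simp
  also have "\<dots> \<le> \<eta> * B" unfolding B_def using \<eta>_pos by (intro mult_left_mono) auto
  moreover have "f B \<le> s0 - \<eta> * B" unfolding epi_f_def using s0_pos by (simp add: algebra_simps)
  ultimately have "f B < 0" by simp
  have B: "\<delta> < B" using \<delta> unfolding B_def by simp
  moreover have "continuous_on {\<delta>..B} f"
    by (intro continuous_at_imp_continuous_on) (simp add: isCont_f)
  ultimately obtain v where "\<delta> \<le> v" "v \<le> B" "f v = 0"
    using IVT2'[of f B 0 \<delta>] \<open>0 < f \<delta>\<close> \<open>f B < 0\<close> by auto
  then show ?thesis using \<delta>(1) by (intro exI[of _ v]) simp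
qed

text \<open>The positive equilibrium of the reaction, to which \<open>I\<close> rises wherever the source is negligible.\<close>
definition v_star :: real where "v_star = (SOME v. 0 < v \<and> f v = 0)"

lemma v_star: "0 < v_star" "f v_star = 0"
  using someI_ex[OF ex_pos_zero_f] unfolding v_star_def by auto

lemma f_ratio_pos_below_v_star: "0 < y \<Longrightarrow> y < v_star \<Longrightarrow> 0 < f y / y"
  using f_ratio_strict_antimono[of y v_star] v_star by simp

lemma f_neg_above_v_star:
  assumes "v_star < y"
  shows "f y < 0"
proof -
  have "f y / y < 0" using f_ratio_strict_antimono[of v_star y] assms v_star by simp
  then show ?thesis using assms v_star by (simp add: divide_less_0_iff)
qed

lemma f_le_neg_above_v_star:
  assumes "0 < e"
  obtains m where "0 < m" "\<And>y. v_star + e \<le> y \<Longrightarrow> f y \<le> - m"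
proof
  define z where "z = v_star + e"
  have z: "0 < z" "f z < 0" using f_neg_above_v_star assms v_star unfolding z_def by auto
  show "0 < - f z" using z by simp
  fix y assume "v_star + e \<le> y"
  then have y: "z \<le> y" unfolding z_def .
  have "f y \<le> y * (f z / z)"
    using f_ratio_antimono[of z y] y z by (simp add: field_simps)
  also have "\<dots> \<le> z * (f z / z)"
    using y z by (intro mult_right_mono_neg) (auto simp: divide_nonpos_pos)
  finally show "f y \<le> - (- f z)" using z by simp
qed

end

section \<open>Positivity, monotonicity and the stationary bound\<close>

locale lattice_epidemic = epidemic_reaction +
  fixes lam :: real and I0 Iinf :: "int \<Rightarrow> real" and I :: "real \<Rightarrow> int \<Rightarrow> real"
  assumes lam_pos: "0 < lam"
    and I0_fin: "finite {j. I0 j \<noteq> 0}"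
    and I0_nonneg: "\<And>j. 0 \<le> I0 j"
    and I0_nz: "\<exists>j. 0 < I0 j"
    and Iinf_pos: "\<And>j. 0 < Iinf j"
    and Iinf_bdd: "bounded (range Iinf)"
    and Iinf_eq: "\<And>j. 0 = epi_f s0 \<tau> \<eta> (Iinf j) + I0 j + lam * dlap Iinf j"
    and I_cont: "\<And>j. continuous_on {0..} (\<lambda>t. I t j)"
    and I_ode: "\<And>j t. 0 < t \<Longrightarrow>
      ((\<lambda>s. I s j) has_real_derivative epi_f s0 \<tau> \<eta> (I t j) + I0 j + lam * dlap (I t) j) (at t)"
    and I_init: "\<And>j. I 0 j = 0"
    and I_bdd: "\<And>T. bounded {I t j |t j. 0 \<le> t \<and> t \<le> T}"
begin

lemma I_bounded_on:
  obtains B where "\<And>t j. 0 \<le> t \<Longrightarrow> t \<le> T \<Longrightarrow> \<bar>I t j\<bar> \<le> B"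
  using I_bdd[of T] unfolding bounded_real by blast

lemma Iinf_bounded:
  obtains B where "\<And>j. \<bar>Iinf j\<bar> \<le> B"
  using Iinf_bdd unfolding bounded_real by blast

lemma I_continuous_on: "0 \<le> ta \<Longrightarrow> continuous_on {ta..tb} (\<lambda>t. I t j)"
  by (rule continuous_on_subset[OF I_cont]) auto

lemma I_subsolution:
  "0 < t \<Longrightarrow> \<exists>d. ((\<lambda>s. I s j) has_real_derivative d) (at t) \<and> d \<le> f (I t j) + I0 j + lam * dlap (I t) j"
  using I_ode by blast

lemma I_supersolution:
  "0 < t \<Longrightarrow> \<exists>d. ((\<lambda>s. I s j) has_real_derivative d) (at t) \<and> f (I t j) + I0 j + lam * dlap (I t) j \<le> d"
  using I_ode by blast

lemma comparison:
  fixes u v :: "real \<Rightarrow> int \<Rightarrow> real"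
  assumes cu: "\<And>j. continuous_on {ta..tb} (\<lambda>t. u t j)"
    and cv: "\<And>j. continuous_on {ta..tb} (\<lambda>t. v t j)"
    and init: "\<And>j. u ta j \<le> v ta j"
    and bdd: "\<And>j t. ta \<le> t \<Longrightarrow> t \<le> tb \<Longrightarrow> u t j - v t j \<le> M"
    and v_nonneg: "\<And>j t. ta < t \<Longrightarrow> t \<le> tb \<Longrightarrow> 0 \<le> v t j"
    and sub: "\<And>j t. ta < t \<Longrightarrow> t \<le> tb \<Longrightarrow> v t j < u t j \<Longrightarrow>
      \<exists>d. ((\<lambda>s. u s j) has_real_derivative d) (at t) \<and> d \<le> f (u t j) + I0 j + lam * dlap (u t) j"
    and super: "\<And>j t. ta < t \<Longrightarrow> t \<le> tb \<Longrightarrow> v t j < u t j \<Longrightarrow>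
      \<exists>d. ((\<lambda>s. v s j) has_real_derivative d) (at t) \<and> f (v t j) + I0 j + lam * dlap (v t) j \<le> d"
    and t: "ta \<le> t" "t \<le> tb"
  shows "u t j \<le> v t j"
proof (rule lattice_comparison[OF less_imp_le[OF r_pos] less_imp_le[OF lam_pos] cu cv init bdd _ sub super t])
  fix j s assume "ta < s" "s \<le> tb" "v s j < u s j"
  then show "f (u s j) - f (v s j) \<le> r * (u s j - v s j)"
    using f_diff_le[of "v s j" "u s j"] v_nonneg[of s j] by simp
qed

lemma I_nonneg:
  assumes "0 \<le> t"
  shows "0 \<le> I t j"
proof -
  obtain B where B: "\<And>s j. 0 \<le> s \<Longrightarrow> s \<le> t \<Longrightarrow> \<bar>I s j\<bar> \<le> B" using I_bounded_on by blast
  show ?thesis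
  proof (rule lattice_comparison[where u = "\<lambda>_ _. 0" and v = I and g = f and a = I0
        and L = "s0 * \<tau> * exp (\<tau> * B)" and ta = 0 and tb = t and M = B])
    show "0 \<le> s0 * \<tau> * exp (\<tau> * B)" "0 \<le> lam" using s0_pos \<tau>_pos lam_pos by auto
    show "continuous_on {0..t} (\<lambda>_. 0)" "continuous_on {0..t} (\<lambda>s. I s j)" for j
      by (auto intro: I_continuous_on)
    show "0 \<le> I 0 j" for j using I_init by simp
    show "0 - I s j \<le> B" if "0 \<le> s" "s \<le> t" for j s using B[OF that, of j] by linarith
    show "f 0 - f (I s j) \<le> s0 * \<tau> * exp (\<tau> * B) * (0 - I s j)"
      if "0 < s" "s \<le> t" "I s j < 0" for j s
      using f_neg_lipschitz[of "I s j" B] B[of s j] that by simp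
    show "\<exists>d. ((\<lambda>s. 0) has_real_derivative d) (at s) \<and> d \<le> f 0 + I0 j + lam * dlap (\<lambda>_. 0) j"
      for j s using I0_nonneg[of j] by (intro exI[of _ 0]) (auto simp: dlap_def)
  qed (use assms I_supersolution in auto)
qed

lemma I_le_Iinf:
  assumes "0 \<le> t"
  shows "I t j \<le> Iinf j"
proof -
  obtain B where B: "\<And>s j. 0 \<le> s \<Longrightarrow> s \<le> t \<Longrightarrow> \<bar>I s j\<bar> \<le> B" using I_bounded_on by blast
  show ?thesis
  proof (rule comparison[where u = I and v = "\<lambda>_. Iinf" and ta = 0 and tb = t and M = B])
    show "continuous_on {0..t} (\<lambda>s. I s j)" for j by (rule I_continuous_on) simp
    show "I 0 j \<le> Iinf j" for j using I_init Iinf_pos[of j] by simp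
    show "I s j - Iinf j \<le> B" if "0 \<le> s" "s \<le> t" for j s
      using B[OF that, of j] Iinf_pos[of j] by linarith
    show "\<exists>d. ((\<lambda>_. Iinf j) has_real_derivative d) (at s) \<and> f (Iinf j) + I0 j + lam * dlap Iinf j \<le> d"
      for j s using Iinf_eq[of j] by (intro exI[of _ 0]) auto
  qed (use assms I_subsolution Iinf_pos in \<open>auto intro: less_imp_le\<close>)
qed

lemma I_le_shift:
  assumes "0 \<le> t" "0 \<le> h"
  shows "I t j \<le> I (t + h) j"
proof -
  obtain B where B: "\<And>s j. 0 \<le> s \<Longrightarrow> s \<le> t + h \<Longrightarrow> \<bar>I s j\<bar> \<le> B" using I_bounded_on by blast
  show ?thesis
  proof (rule comparison[where u = I and v = "\<lambda>s. I (s + h)" and ta = 0 and tb = t and M = "2 * B"])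
    show "continuous_on {0..t} (\<lambda>s. I s j)" for j by (rule I_continuous_on) simp
    have "continuous_on {0..t} ((\<lambda>s. I s j) \<circ> (\<lambda>s. s + h))" for j
      by (rule continuous_on_compose)
        (use assms in \<open>auto intro!: continuous_intros continuous_on_subset[OF I_cont[of j]]\<close>)
    then show "continuous_on {0..t} (\<lambda>s. I (s + h) j)" for j by (simp add: o_def)
    show "I 0 j \<le> I (0 + h) j" for j using I_init I_nonneg[of h j] assms by simp
    show "I s j - I (s + h) j \<le> 2 * B" if "0 \<le> s" "s \<le> t" for j s
      using B[of s j] B[of "s + h" j] that assms by simp
    show "0 \<le> I (s + h) j" if "0 < s" for j s using that assms by (intro I_nonneg) simp
    show "\<exists>d. ((\<lambda>s. I (s + h) j) has_real_derivative d) (at s) \<and>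
        f (I (s + h) j) + I0 j + lam * dlap (I (s + h)) j \<le> d" if "0 < s" for j s
      using I_ode[of "s + h" j] that assms by (auto simp: DERIV_shift)
  qed (use assms I_subsolution in auto)
qed

lemma I_mono: "0 \<le> t \<Longrightarrow> t \<le> t' \<Longrightarrow> I t j \<le> I t' j"
  using I_le_shift[of t "t' - t" j] by simp

lemma I_pos_if_fed:
  assumes fed: "\<And>s. 0 < s \<Longrightarrow> 0 < I0 j \<or> 0 < I s (j - 1) \<or> 0 < I s (j + 1)"
    and t: "0 < t"
  shows "0 < I t j"
proof -
  define K where "K = \<eta> + 2 * lam"
  define g where "g s = exp (K * s) * I s j" for s
  have "g 0 < g t"
  proof (rule DERIV_pos_imp_increasing_open[OF t])
    show "continuous_on {0..t} g" unfolding g_def by (intro continuous_intros I_continuous_on) simp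
    fix x assume x: "0 < x" "x < t"
    define D where "D = f (I x j) + I0 j + lam * dlap (I x) j"
    have "(g has_real_derivative exp (K * x) * (K * I x j + D)) (at x)"
      unfolding g_def D_def using I_ode[of x j] x
      by (auto intro!: derivative_eq_intros simp: algebra_simps)
    moreover have "0 < K * I x j + D"
    proof -
      have nn: "0 \<le> I x j" "0 \<le> I x (j - 1)" "0 \<le> I x (j + 1)"
        using I_nonneg x by auto
      have "I0 j + lam * (I x (j - 1) + I x (j + 1)) \<le> K * I x j + D"
        using f_ge_minus_eta[OF nn(1)] unfolding D_def K_def dlap_def by (simp add: algebra_simps)
      moreover have "0 < I0 j + lam * (I x (j - 1) + I x (j + 1))"
      proof -
        have "0 < I0 j \<or> 0 < I x (j - 1) + I x (j + 1)" using fed[OF x(1)] nn by auto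
        then consider "0 < I0 j" | "0 < lam * (I x (j - 1) + I x (j + 1))" using lam_pos by auto
        moreover have "0 \<le> lam * (I x (j - 1) + I x (j + 1))" using nn lam_pos by simp
        ultimately show ?thesis using I0_nonneg[of j] by cases linarith+
      qed
      ultimately show ?thesis by linarith
    qed
    ultimately show "\<exists>y. (g has_real_derivative y) (at x) \<and> 0 < y" by auto
  qed
  then show ?thesis using I_init unfolding g_def by (simp add: zero_less_mult_iff)
qed

lemma I_pos:
  assumes "0 < t"
  shows "0 < I t j"
proof -
  obtain j0 where j0: "0 < I0 j0" using I0_nz by blast
  have "\<forall>j. nat \<bar>j - j0\<bar> \<le> n \<longrightarrow> (\<forall>t>0. 0 < I t j)" for n
  proof (induction n)
    case 0
    show ?case
    proof (rule allI, rule impI)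
      fix j assume "nat \<bar>j - j0\<bar> \<le> 0"
      then have "j = j0" by simp
      then show "\<forall>t>0. 0 < I t j" using I_pos_if_fed j0 by blast
    qed
  next
    case (Suc n)
    show ?case
    proof (rule allI, rule impI)
      fix j assume j: "nat \<bar>j - j0\<bar> \<le> Suc n"
      show "\<forall>t>0. 0 < I t j"
      proof (cases "nat \<bar>j - j0\<bar> \<le> n")
        case True
        then show ?thesis using Suc by blast
      next
        case False
        then have "nat \<bar>(j - 1) - j0\<bar> \<le> n \<or> nat \<bar>(j + 1) - j0\<bar> \<le> n"
          using j by (cases "j0 < j") auto
        then show ?thesis using Suc I_pos_if_fed by blast
      qed
    qed
  qed
  then show ?thesis using assms by blast
qed

end

section \<open>Exponential supersolutions and the region beyond \<open>c\<^sub>*\<close>\<close>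

definition lap_exp_factor :: "real \<Rightarrow> real" where
  "lap_exp_factor \<gamma> = exp \<gamma> - 2 + exp (- \<gamma>)"

lemma lap_exp_factor_nonneg: "0 \<le> lap_exp_factor \<gamma>"
proof -
  have "exp (\<gamma> / 2) * exp (\<gamma> / 2) = exp \<gamma>" "exp (- \<gamma> / 2) * exp (- \<gamma> / 2) = exp (- \<gamma>)"
    "exp (\<gamma> / 2) * exp (- \<gamma> / 2) = 1"
    by (simp_all add: exp_add[symmetric])
  then have "lap_exp_factor \<gamma> = (exp (\<gamma> / 2) - exp (- \<gamma> / 2)) ^ 2"
    unfolding lap_exp_factor_def power2_eq_square by (simp add: algebra_simps)
  then show ?thesis by simp
qed

lemma dlap_exp_abs_le:
  fixes \<gamma> :: real and j :: int
  assumes "0 < \<gamma>"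
  shows "dlap (\<lambda>j. exp (- \<gamma> * real_of_int \<bar>j\<bar>)) j \<le> lap_exp_factor \<gamma> * exp (- \<gamma> * real_of_int \<bar>j\<bar>)"
proof -
  have e: "exp (a + b) = exp a * exp b" for a b :: real by (simp add: exp_add)
  consider "1 \<le> j" | "j \<le> - 1" | "j = 0" by linarith
  then show ?thesis
  proof cases
    case 1
    then have "\<bar>real_of_int (j - 1)\<bar> = \<bar>real_of_int j\<bar> - 1" "\<bar>real_of_int (j + 1)\<bar> = \<bar>real_of_int j\<bar> + 1"
      by auto
    then show ?thesis
      unfolding dlap_def lap_exp_factor_def by (simp add: e[symmetric] algebra_simps)
  next
    case 2
    then have "\<bar>real_of_int (j - 1)\<bar> = \<bar>real_of_int j\<bar> + 1" "\<bar>real_of_int (j + 1)\<bar> = \<bar>real_of_int j\<bar> - 1"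
      by auto
    then show ?thesis
      unfolding dlap_def lap_exp_factor_def by (simp add: e[symmetric] algebra_simps)
  next
    case 3
    have "exp (- \<gamma>) \<le> exp \<gamma>" using assms by simp
    then show ?thesis using 3 unfolding dlap_def lap_exp_factor_def by simp
  qed
qed

lemma Limsup_SUP_abs_eq_0:
  fixes g :: "real \<Rightarrow> int \<Rightarrow> real" and S :: "real \<Rightarrow> int set"
  assumes ne: "\<forall>\<^sub>F t in at_top. S t \<noteq> {}"
    and small: "\<And>e. 0 < e \<Longrightarrow> \<forall>\<^sub>F t in at_top. \<forall>j\<in>S t. \<bar>g t j\<bar> \<le> e"
  shows "Limsup at_top (\<lambda>t. SUP j\<in>S t. ereal \<bar>g t j\<bar>) = 0"
proof (rule antisym)
  show "Limsup at_top (\<lambda>t. SUP j\<in>S t. ereal \<bar>g t j\<bar>) \<le> 0"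
    unfolding Limsup_le_iff
  proof (intro allI impI)
    fix y :: ereal assume y: "0 < y"
    obtain e :: real where e: "0 < e" "ereal e < y"
    proof (cases y)
      case (real z)
      then show ?thesis using y that[of "z / 2"] by auto
    qed (use y that[of 1] in auto)
    show "\<forall>\<^sub>F t in at_top. (SUP j\<in>S t. ereal \<bar>g t j\<bar>) < y"
      using small[OF e(1)]
    proof (rule eventually_mono)
      fix t assume "\<forall>j\<in>S t. \<bar>g t j\<bar> \<le> e"
      then have "(SUP j\<in>S t. ereal \<bar>g t j\<bar>) \<le> ereal e" by (intro SUP_least) auto
      then show "(SUP j\<in>S t. ereal \<bar>g t j\<bar>) < y" using e by auto
    qed
  qed
  have "\<forall>\<^sub>F t in at_top. 0 \<le> (SUP j\<in>S t. ereal \<bar>g t j\<bar>)"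
    using ne by (rule eventually_mono) (auto intro: SUP_upper2)
  then show "0 \<le> Limsup at_top (\<lambda>t. SUP j\<in>S t. ereal \<bar>g t j\<bar>)"
    by (intro le_Limsup) auto
qed

context lattice_epidemic
begin

lemma exp_front_supersolution:
  fixes \<gamma> c t y D A :: real and j :: int
  assumes \<gamma>: "0 < \<gamma>" and D: "D = \<gamma> * c - r - lam * lap_exp_factor \<gamma>" "0 < D"
    and A: "0 \<le> A" "\<And>j. I0 j \<le> D * A * exp (- \<gamma> * real_of_int \<bar>j\<bar>)"
    and t: "0 \<le> t" and y: "0 \<le> y"
  shows "f (y + A * exp (\<gamma> * (c * t - real_of_int \<bar>j\<bar>))) + I0 j
      + lam * dlap (\<lambda>j. y + A * exp (\<gamma> * (c * t - real_of_int \<bar>j\<bar>))) j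
    \<le> f y + \<gamma> * c * (A * exp (\<gamma> * (c * t - real_of_int \<bar>j\<bar>)))"
proof -
  define E where "E = A * exp (\<gamma> * c * t)"
  define \<phi> where "\<phi> j = E * exp (- \<gamma> * real_of_int \<bar>j\<bar>)" for j :: int
  have \<phi>: "A * exp (\<gamma> * (c * t - real_of_int \<bar>j\<bar>)) = \<phi> j" for j
    unfolding \<phi>_def E_def by (simp add: exp_add[symmetric] algebra_simps)
  have "0 \<le> lam * lap_exp_factor \<gamma>" using lam_pos lap_exp_factor_nonneg[of \<gamma>] by simp
  then have "0 < \<gamma> * c" using D r_pos by linarith
  then have "1 \<le> exp (\<gamma> * c * t)" using t by simp
  then have E: "A \<le> E" unfolding E_def using mult_left_mono[OF _ A(1)] by fastforce
  have \<phi>_nonneg: "0 \<le> \<phi> j" unfolding \<phi>_def E_def using A(1) by simp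
  have "dlap (\<lambda>j. y + \<phi> j) j = E * dlap (\<lambda>j. exp (- \<gamma> * real_of_int \<bar>j\<bar>)) j"
    unfolding dlap_def \<phi>_def by (simp add: algebra_simps)
  also have "\<dots> \<le> E * (lap_exp_factor \<gamma> * exp (- \<gamma> * real_of_int \<bar>j\<bar>))"
    using dlap_exp_abs_le[OF \<gamma>] A(1) E by (intro mult_left_mono) auto
  finally have "lam * dlap (\<lambda>j. y + \<phi> j) j \<le> lam * (E * (lap_exp_factor \<gamma> * exp (- \<gamma> * real_of_int \<bar>j\<bar>)))"
    using lam_pos by (intro mult_left_mono) auto
  also have "\<dots> = lam * lap_exp_factor \<gamma> * \<phi> j" unfolding \<phi>_def by simp
  finally have "lam * dlap (\<lambda>j. y + \<phi> j) j \<le> lam * lap_exp_factor \<gamma> * \<phi> j" .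
  moreover have "f (y + \<phi> j) \<le> f y + r * \<phi> j" using f_diff_le[of y "y + \<phi> j"] y \<phi>_nonneg by simp
  moreover have "I0 j \<le> D * \<phi> j"
  proof -
    have "D * A * exp (- \<gamma> * real_of_int \<bar>j\<bar>) \<le> D * E * exp (- \<gamma> * real_of_int \<bar>j\<bar>)"
      using E D by (intro mult_right_mono mult_left_mono) auto
    then show ?thesis using A(2)[of j] unfolding \<phi>_def by (simp add: mult.assoc)
  qed
  ultimately have "f (y + \<phi> j) + I0 j + lam * dlap (\<lambda>j. y + \<phi> j) j \<le> f y + (r + D + lam * lap_exp_factor \<gamma>) * \<phi> j"
    by (simp add: algebra_simps)
  also have "r + D + lam * lap_exp_factor \<gamma> = \<gamma> * c" using D by simp
  finally show ?thesis unfolding \<phi>[symmetric] .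
qed

lemma I0_le_exp_profile:
  fixes \<gamma> D :: real
  assumes "0 < D"
  obtains A where "0 \<le> A" "\<And>j. I0 j \<le> D * A * exp (- \<gamma> * real_of_int \<bar>j\<bar>)"
proof
  define S where "S = {j. I0 j \<noteq> 0}"
  define A where "A = (\<Sum>j\<in>S. I0 j * exp (\<gamma> * real_of_int \<bar>j\<bar>)) / D"
  have nn: "0 \<le> I0 j * exp (\<gamma> * real_of_int \<bar>j\<bar>)" for j using I0_nonneg[of j] by simp
  show "0 \<le> A" unfolding A_def using assms nn by (intro divide_nonneg_pos sum_nonneg) auto
  fix j
  show "I0 j \<le> D * A * exp (- \<gamma> * real_of_int \<bar>j\<bar>)"
  proof (cases "j \<in> S")
    case True
    have "I0 j * exp (\<gamma> * real_of_int \<bar>j\<bar>) \<le> (\<Sum>j\<in>S. I0 j * exp (\<gamma> * real_of_int \<bar>j\<bar>))"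
      using True I0_fin nn unfolding S_def by (intro member_le_sum) auto
    then have "I0 j * exp (\<gamma> * real_of_int \<bar>j\<bar>) \<le> D * A" unfolding A_def using assms by simp
    then have "I0 j * exp (\<gamma> * real_of_int \<bar>j\<bar>) * exp (- \<gamma> * real_of_int \<bar>j\<bar>) \<le> D * A * exp (- \<gamma> * real_of_int \<bar>j\<bar>)"
      by (intro mult_right_mono) auto
    then show ?thesis by (simp add: mult.assoc exp_add[symmetric])
  next
    case False
    then show ?thesis using \<open>0 \<le> A\<close> assms unfolding S_def by simp
  qed
qed

lemma I_le_exp_front:
  fixes \<gamma> c t D A :: real and j :: int
  assumes \<gamma>: "0 < \<gamma>" and D: "D = \<gamma> * c - r - lam * lap_exp_factor \<gamma>" "0 < D"
    and A: "0 \<le> A" "\<And>j. I0 j \<le> D * A * exp (- \<gamma> * real_of_int \<bar>j\<bar>)"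
    and t: "0 \<le> t"
  shows "I t j \<le> A * exp (\<gamma> * (c * t - real_of_int \<bar>j\<bar>))"
proof -
  obtain B where B: "\<And>s j. 0 \<le> s \<Longrightarrow> s \<le> t \<Longrightarrow> \<bar>I s j\<bar> \<le> B" using I_bounded_on by blast
  show ?thesis
  proof (rule comparison[where u = I and v = "\<lambda>s j. A * exp (\<gamma> * (c * s - real_of_int \<bar>j\<bar>))"
        and ta = 0 and tb = t and M = B])
    show "continuous_on {0..t} (\<lambda>s. I s j)" for j by (rule I_continuous_on) simp
    show "I 0 j \<le> A * exp (\<gamma> * (c * 0 - real_of_int \<bar>j\<bar>))" for j using I_init A by simp
    show "I s j - A * exp (\<gamma> * (c * s - real_of_int \<bar>j\<bar>)) \<le> B" if "0 \<le> s" "s \<le> t" for j s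
      using B[OF that, of j] mult_nonneg_nonneg[OF A(1) exp_ge_zero[of "\<gamma> * (c * s - real_of_int \<bar>j\<bar>)"]]
      by linarith
    fix j s assume s: "0 < s" "s \<le> t"
    have "((\<lambda>s. A * exp (\<gamma> * (c * s - real_of_int \<bar>j\<bar>))) has_real_derivative
        \<gamma> * c * (A * exp (\<gamma> * (c * s - real_of_int \<bar>j\<bar>)))) (at s)"
      by (auto intro!: derivative_eq_intros simp: algebra_simps)
    moreover have "f (A * exp (\<gamma> * (c * s - real_of_int \<bar>j\<bar>))) + I0 j + lam * dlap (\<lambda>j. A * exp (\<gamma> * (c * s - real_of_int \<bar>j\<bar>))) j
        \<le> \<gamma> * c * (A * exp (\<gamma> * (c * s - real_of_int \<bar>j\<bar>)))"
      using exp_front_supersolution[OF \<gamma> D A, of s 0 j] s by simp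
    ultimately show "\<exists>d. ((\<lambda>s. A * exp (\<gamma> * (c * s - real_of_int \<bar>j\<bar>))) has_real_derivative d) (at s) \<and>
        f (A * exp (\<gamma> * (c * s - real_of_int \<bar>j\<bar>))) + I0 j + lam * dlap (\<lambda>j. A * exp (\<gamma> * (c * s - real_of_int \<bar>j\<bar>))) j \<le> d"
      by blast
  qed (use t A(1) I_subsolution in \<open>auto intro!: continuous_intros\<close>)
qed

lemma c_star_eq: "c_star s0 \<tau> \<eta> lam = (INF \<gamma>\<in>{0<..}. (r + lam * lap_exp_factor \<gamma>) / \<gamma>)"
  unfolding c_star_def eta_R0_minus_1 lap_exp_factor_def by (simp add: algebra_simps)

lemma I_vanishes_beyond_c_star:
  assumes c: "c_star s0 \<tau> \<eta> lam < c"
  shows "Limsup at_top (\<lambda>t. SUP j\<in>{j. c * t \<le> real_of_int \<bar>j\<bar>}. ereal \<bar>I t j\<bar>) = 0"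
proof (rule Limsup_SUP_abs_eq_0)
  obtain \<gamma> :: real where \<gamma>: "0 < \<gamma>" "(r + lam * lap_exp_factor \<gamma>) / \<gamma> < c"
    using cInf_lessD[of "(\<lambda>\<gamma>. (r + lam * lap_exp_factor \<gamma>) / \<gamma>) ` {0<..}" c] c
    unfolding c_star_eq by auto
  define c' where "c' = ((r + lam * lap_exp_factor \<gamma>) / \<gamma> + c) / 2"
  define D where "D = \<gamma> * c' - r - lam * lap_exp_factor \<gamma>"
  define \<kappa> where "\<kappa> = \<gamma> * (c - c')"
  have "c' < c" using \<gamma> unfolding c'_def by simp
  then have "0 < \<kappa>" using \<gamma> unfolding \<kappa>_def by simp
  moreover have "D = \<kappa>" using \<gamma> unfolding D_def \<kappa>_def c'_def by (simp add: field_simps)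
  ultimately have D: "0 < D" by simp
  obtain A where A: "0 \<le> A" "\<And>j. I0 j \<le> D * A * exp (- \<gamma> * real_of_int \<bar>j\<bar>)"
    using I0_le_exp_profile[OF D] by blast
  have "{j. c * t \<le> real_of_int \<bar>j\<bar>} \<noteq> {}" for t
  proof -
    have "c * t \<le> real_of_int \<bar>\<lceil>\<bar>c * t\<bar>\<rceil>\<bar>" by linarith
    then show ?thesis by blast
  qed
  then show "\<forall>\<^sub>F t in at_top. {j. c * t \<le> real_of_int \<bar>j\<bar>} \<noteq> {}" by simp
  fix e :: real assume e: "0 < e"
  have "((\<lambda>t. exp (- \<kappa> * t)) \<longlongrightarrow> 0) at_top"
    by (rule filterlim_compose[OF exp_at_bot filterlim_tendsto_neg_mult_at_bot[OF tendsto_const]])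
      (use \<open>0 < \<kappa>\<close> in \<open>auto intro: filterlim_ident\<close>)
  then have "((\<lambda>t. A * exp (- \<kappa> * t)) \<longlongrightarrow> 0) at_top" by (rule tendsto_mult_right_zero)
  then have "\<forall>\<^sub>F t in at_top. A * exp (- \<kappa> * t) < e" using e by (rule order_tendstoD)
  moreover have "\<forall>\<^sub>F t in at_top. 0 \<le> (t::real)" by (rule eventually_ge_at_top)
  ultimately show "\<forall>\<^sub>F t in at_top. \<forall>j\<in>{j. c * t \<le> real_of_int \<bar>j\<bar>}. \<bar>I t j\<bar> \<le> e"
  proof eventually_elim
    case (elim t)
    show ?case
    proof
      fix j assume j: "j \<in> {j. c * t \<le> real_of_int \<bar>j\<bar>}"
      have "I t j \<le> A * exp (\<gamma> * (c' * t - real_of_int \<bar>j\<bar>))"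
        by (rule I_le_exp_front[OF \<gamma>(1) D_def D A]) (use elim in simp)
      also have "\<dots> \<le> A * exp (- \<kappa> * t)"
      proof -
        have "\<gamma> * (c' * t - real_of_int \<bar>j\<bar>) \<le> \<gamma> * (c' * t - c * t)" using j \<gamma> by (intro mult_left_mono) auto
        also have "\<dots> = - \<kappa> * t" unfolding \<kappa>_def by (simp add: algebra_simps)
        finally show ?thesis using A(1) by (intro mult_left_mono) auto
      qed
      finally show "\<bar>I t j\<bar> \<le> e" using elim I_nonneg[of t j] by simp
    qed
  qed
qed

lemma Iinf_le_front:
  assumes e: "0 < e"
  obtains A c t1 where "0 \<le> A" "\<And>j. Iinf j \<le> v_star + e + A * exp (c * t1 - real_of_int \<bar>j\<bar>)"
proof -
  define c where "c = r + lam * lap_exp_factor 1 + 1"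
  have D: "1 = 1 * c - r - lam * lap_exp_factor 1" "(0::real) < 1" unfolding c_def by simp_all
  obtain A where A: "0 \<le> A" "\<And>j. I0 j \<le> 1 * A * exp (- 1 * real_of_int \<bar>j\<bar>)"
    using I0_le_exp_profile[OF D(2)] by blast
  obtain m where m: "0 < m" "\<And>y. v_star + e \<le> y \<Longrightarrow> f y \<le> - m"
    using f_le_neg_above_v_star[OF e] by blast
  obtain B where B: "\<And>j. \<bar>Iinf j\<bar> \<le> B" using Iinf_bounded by blast
  txt \<open>A supersolution \<open>y s + A exp (c s - |j|)\<close>: the level \<open>y\<close> decreases at rate \<open>m\<close>, which
    \<open>f \<le> - m\<close> above \<open>v_star + e\<close> pays for, down to \<open>v_star + e\<close> at time \<open>t1\<close>.\<close>
  define t1 where "t1 = (max B (v_star + e) - (v_star + e)) / m"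
  define y where "y s = max B (v_star + e) - m * s" for s
  have t1: "0 \<le> t1" "y t1 = v_star + e" unfolding t1_def y_def using m by auto
  have y_ge: "v_star + e \<le> y s" if "s \<le> t1" for s
    using mult_left_mono[OF that less_imp_le[OF m(1)]] t1 unfolding y_def by simp
  have y_nonneg: "0 \<le> y s" if "s \<le> t1" for s using y_ge[OF that] v_star e by simp
  have front: "Iinf j \<le> y t1 + A * exp (1 * (c * t1 - real_of_int \<bar>j\<bar>))" for j
  proof (rule comparison[where u = "\<lambda>_. Iinf" and v = "\<lambda>s j. y s + A * exp (1 * (c * s - real_of_int \<bar>j\<bar>))"
        and ta = 0 and tb = t1 and M = B])
    show "continuous_on {0..t1} (\<lambda>s. y s + A * exp (1 * (c * s - real_of_int \<bar>j\<bar>)))" for j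
      unfolding y_def by (intro continuous_intros)
    show "Iinf j \<le> y 0 + A * exp (1 * (c * 0 - real_of_int \<bar>j\<bar>))" for j
      using B[of j] A(1) unfolding y_def by (simp add: add_increasing2)
    show "Iinf j - (y s + A * exp (1 * (c * s - real_of_int \<bar>j\<bar>))) \<le> B" if "0 \<le> s" "s \<le> t1" for j s
      using B[of j] y_nonneg[OF that(2)]
        mult_nonneg_nonneg[OF A(1) exp_ge_zero[of "1 * (c * s - real_of_int \<bar>j\<bar>)"]]
      by linarith
    show "0 \<le> y s + A * exp (1 * (c * s - real_of_int \<bar>j\<bar>))" if "0 < s" "s \<le> t1" for j s
      using y_nonneg[OF that(2)] A(1) by simp
    show "\<exists>d. ((\<lambda>_. Iinf j) has_real_derivative d) (at s) \<and> d \<le> f (Iinf j) + I0 j + lam * dlap Iinf j"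
      for j s using Iinf_eq[of j] by (intro exI[of _ 0]) auto
    fix j s assume s: "0 < s" "s \<le> t1"
    have "((\<lambda>s. y s + A * exp (1 * (c * s - real_of_int \<bar>j\<bar>))) has_real_derivative
        - m + 1 * c * (A * exp (1 * (c * s - real_of_int \<bar>j\<bar>)))) (at s)"
      unfolding y_def by (auto intro!: derivative_eq_intros)
    moreover have "f (y s + A * exp (1 * (c * s - real_of_int \<bar>j\<bar>))) + I0 j
        + lam * dlap (\<lambda>j. y s + A * exp (1 * (c * s - real_of_int \<bar>j\<bar>))) j
      \<le> f (y s) + 1 * c * (A * exp (1 * (c * s - real_of_int \<bar>j\<bar>)))"
      using exp_front_supersolution[OF _ D A, of s "y s" j] s y_nonneg by simp
    moreover have "f (y s) \<le> - m" using m(2) y_ge s by simp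
    ultimately show "\<exists>d. ((\<lambda>s. y s + A * exp (1 * (c * s - real_of_int \<bar>j\<bar>))) has_real_derivative d) (at s) \<and>
        f (y s + A * exp (1 * (c * s - real_of_int \<bar>j\<bar>))) + I0 j
          + lam * dlap (\<lambda>j. y s + A * exp (1 * (c * s - real_of_int \<bar>j\<bar>))) j \<le> d"
      by (intro exI[of _ "- m + 1 * c * (A * exp (1 * (c * s - real_of_int \<bar>j\<bar>)))"] conjI) auto
  qed (use t1 in simp_all)
  show thesis
  proof (rule that[OF A(1)])
    show "Iinf j \<le> v_star + e + A * exp (c * t1 - real_of_int \<bar>j\<bar>)" for j
      using front[of j] t1(2) by simp
  qed
qed

lemma Iinf_tail_le:
  assumes e: "0 < e"
  obtains R where "\<And>j. R \<le> real_of_int \<bar>j\<bar> \<Longrightarrow> Iinf j \<le> v_star + e"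
proof -
  have "0 < e / 2" using e by simp
  then obtain A c t1 where A: "0 \<le> A"
    and front: "\<And>j. Iinf j \<le> v_star + e / 2 + A * exp (c * t1 - real_of_int \<bar>j\<bar>)"
    using Iinf_le_front by blast
  define \<epsilon> where "\<epsilon> = e / 2 / (A + 1)"
  have \<epsilon>: "0 < \<epsilon>" "A * \<epsilon> \<le> e / 2" using A e unfolding \<epsilon>_def by (simp_all add: field_simps)
  show thesis
  proof
    fix j assume j: "c * t1 + \<bar>ln \<epsilon>\<bar> \<le> real_of_int \<bar>j\<bar>"
    then have "exp (c * t1 - real_of_int \<bar>j\<bar>) \<le> exp (ln \<epsilon>)" by simp
    then have "A * exp (c * t1 - real_of_int \<bar>j\<bar>) \<le> A * \<epsilon>" using A \<epsilon> by (simp add: mult_left_mono)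
    then show "Iinf j \<le> v_star + e" using front[of j] \<epsilon> by linarith
  qed
qed

end

section \<open>Sine humps\<close>

text \<open>\<open>exp (- a x) sin (b x)\<close> on \<open>[0, \<pi> / b]\<close> and \<open>0\<close> elsewhere, written so that it is visibly continuous.\<close>
definition hump :: "real \<Rightarrow> real \<Rightarrow> real \<Rightarrow> real" where
  "hump a b x = exp (- a * x) * sin (b * max 0 (min x (pi / b)))"

lemma hump_inside: "0 < b \<Longrightarrow> 0 < x \<Longrightarrow> x < pi / b \<Longrightarrow> hump a b x = exp (- a * x) * sin (b * x)"
  unfolding hump_def by simp

lemma hump_outside:
  assumes "0 < b" "x \<le> 0 \<or> pi / b \<le> x"
  shows "hump a b x = 0"
proof -
  have "b * max 0 (min x (pi / b)) = 0 \<or> b * max 0 (min x (pi / b)) = pi"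
    using assms by (auto simp: min_def max_def)
  then show ?thesis unfolding hump_def by auto
qed

lemma hump_pos_imp_inside: "0 < b \<Longrightarrow> 0 < hump a b x \<Longrightarrow> 0 < x \<and> x < pi / b"
  using hump_outside[of b x a] by force

lemma continuous_on_hump:
  fixes g :: "real \<Rightarrow> real"
  assumes "continuous_on S g"
  shows "continuous_on S (\<lambda>s. hump a b (g s))"
proof -
  have clamp: "continuous_on S (\<lambda>s. max 0 (min (g s) (pi / b)))"
    by (intro continuous_on_max continuous_on_min continuous_intros assms)
  have "continuous_on S (\<lambda>s. sin (b * max 0 (min (g s) (pi / b))))"
    by (intro continuous_on_sin continuous_on_mult continuous_on_const clamp)
  then show ?thesis unfolding hump_def by (intro continuous_intros assms)
qed

lemma hump_nonneg:
  assumes "0 < b"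
  shows "0 \<le> hump a b x"
proof -
  have "b * max 0 (min x (pi / b)) \<le> b * (pi / b)" using assms by (intro mult_left_mono) auto
  then have "0 \<le> sin (b * max 0 (min x (pi / b)))" using assms by (intro sin_ge_zero) auto
  then show ?thesis unfolding hump_def by simp
qed

lemma hump_le_1:
  assumes "0 < b" "0 \<le> a"
  shows "hump a b x \<le> 1"
proof (cases "0 < x \<and> x < pi / b")
  case True
  then have "exp (- a * x) \<le> 1" "0 \<le> sin (b * x)"
    using assms by (auto intro!: sin_ge_zero simp: field_simps)
  then show ?thesis using hump_inside[OF assms(1)] True by (simp add: mult_le_one)
next
  case False
  then show ?thesis using hump_outside[OF assms(1)] by force
qed

lemma hump_ge_scaled_hump_0:
  assumes "0 < b" "0 \<le> a"
  shows "exp (- a * (pi / b)) * hump 0 b x \<le> hump a b x"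
proof (cases "0 < x \<and> x < pi / b")
  case True
  have "a * x \<le> a * (pi / b)" using True assms by (intro mult_left_mono) auto
  moreover have "0 \<le> sin (b * x)" using True assms by (intro sin_ge_zero) (auto simp: field_simps)
  ultimately show ?thesis using hump_inside[OF assms(1)] True by (simp add: mult_right_mono)
next
  case False
  then show ?thesis using hump_outside[OF assms(1)] by force
qed

lemma hump_0_top: "0 < b \<Longrightarrow> hump 0 b (pi / (2 * b)) = 1"
  by (simp add: hump_inside field_simps)

lemma hump_neighbours_ge:
  assumes b: "0 < b" "b \<le> pi" and x: "0 < x" "x < pi / b"
  shows "exp (- a * x) * ((exp a + exp (- a)) * cos b * sin (b * x) - (exp a - exp (- a)) * sin b * cos (b * x))
    \<le> hump a b (x - 1) + hump a b (x + 1)"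
proof -
  have pb: "1 \<le> pi / b" using b by (simp add: field_simps)
  have left: "exp (- a * (x - 1)) * sin (b * (x - 1)) \<le> hump a b (x - 1)"
  proof (cases "0 < x - 1")
    case True
    then show ?thesis using hump_inside[OF b(1), of "x - 1" a] x by simp
  next
    case False
    have "1 - x \<le> pi / b" using x pb by linarith
    then have "b * (1 - x) \<le> b * (pi / b)" using b by (intro mult_left_mono) auto
    then have "0 \<le> sin (b * (1 - x))" using False b by (intro sin_ge_zero) auto
    moreover have "b * (x - 1) = - (b * (1 - x))" by (simp add: algebra_simps)
    ultimately have "sin (b * (x - 1)) \<le> 0" by simp
    then have "exp (- a * (x - 1)) * sin (b * (x - 1)) \<le> 0" by (simp add: mult_nonneg_nonpos)
    then show ?thesis using hump_nonneg[OF b(1)] order_trans by blast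
  qed
  have right: "exp (- a * (x + 1)) * sin (b * (x + 1)) \<le> hump a b (x + 1)"
  proof (cases "x + 1 < pi / b")
    case True
    then show ?thesis using hump_inside[OF b(1), of "x + 1" a] x by simp
  next
    case False
    have "b * (pi / b) \<le> b * (x + 1)" using False b by (intro mult_left_mono) auto
    moreover have "x + 1 < 2 * (pi / b)" using x pb by linarith
    then have "b * (x + 1) < b * (2 * (pi / b))" using b by (intro mult_strict_left_mono) auto
    ultimately have "sin (b * (x + 1)) \<le> 0" using b by (intro sin_le_zero) auto
    then have "exp (- a * (x + 1)) * sin (b * (x + 1)) \<le> 0" by (simp add: mult_nonneg_nonpos)
    then show ?thesis using hump_nonneg[OF b(1)] order_trans by blast
  qed
  have "exp (- a * (x - 1)) = exp (- a * x) * exp a" "exp (- a * (x + 1)) = exp (- a * x) * exp (- a)"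
    by (simp_all add: exp_add[symmetric] algebra_simps)
  moreover have "sin (b * (x - 1)) = sin (b * x) * cos b - cos (b * x) * sin b"
    "sin (b * (x + 1)) = sin (b * x) * cos b + cos (b * x) * sin b"
    by (simp_all add: right_diff_distrib distrib_left sin_diff sin_add)
  ultimately have "exp (- a * (x - 1)) * sin (b * (x - 1)) + exp (- a * (x + 1)) * sin (b * (x + 1))
    = exp (- a * x) * ((exp a + exp (- a)) * cos b * sin (b * x) - (exp a - exp (- a)) * sin b * cos (b * x))"
    by (simp only:) (simp add: algebra_simps)
  then show ?thesis using left right by linarith
qed

lemma hump_0_second_difference_ge:
  assumes b: "0 < b" "b \<le> pi"
  shows "(2 * cos b - 2) * hump 0 b x \<le> hump 0 b (x - 1) + hump 0 b (x + 1) - 2 * hump 0 b x"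
proof (cases "0 < x \<and> x < pi / b")
  case True
  then show ?thesis
    using hump_neighbours_ge[OF b, of x 0] hump_inside[OF b(1), of x 0] by (simp add: algebra_simps)
next
  case False
  then show ?thesis using hump_outside[OF b(1), of x 0] hump_nonneg[OF b(1), of 0] by force
qed

lemma has_real_derivative_moving_hump:
  assumes b: "0 < b" and z: "0 < z - c1 * s" "z - c1 * s < pi / b"
  shows "((\<lambda>s. hump a b (z - c1 * s)) has_real_derivative
      exp (- a * (z - c1 * s)) * c1 * (a * sin (b * (z - c1 * s)) - b * cos (b * (z - c1 * s)))) (at s)"
proof -
  define \<Phi> where "\<Phi> s' = exp (- a * (z - c1 * s')) * sin (b * (z - c1 * s'))" for s'
  define W where "W = {s'. 0 < z - c1 * s' \<and> z - c1 * s' < pi / b}"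
  have "(\<Phi> has_real_derivative
      exp (- a * (z - c1 * s)) * c1 * (a * sin (b * (z - c1 * s)) - b * cos (b * (z - c1 * s)))) (at s)"
    unfolding \<Phi>_def by (auto intro!: derivative_eq_intros simp: algebra_simps)
  moreover have "open W" unfolding W_def by (intro open_Collect_conj open_Collect_less continuous_intros)
  moreover have "s \<in> W" using z unfolding W_def by simp
  moreover have "\<Phi> s' = hump a b (z - c1 * s')" if "s' \<in> W" for s'
    using that hump_inside[OF b] unfolding W_def \<Phi>_def by simp
  ultimately show ?thesis by (rule has_field_derivative_transform_within_open)
qed

section \<open>Spreading below \<open>c\<^sub>*\<close>\<close>

context lattice_epidemic
begin

lemma I_1_ge_hump:
  assumes b: "0 < b" and a: "0 \<le> a" and \<epsilon>: "0 < \<epsilon>"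
  obtains \<delta> where "0 < \<delta>" "\<delta> \<le> \<epsilon>" "\<And>k. \<delta> * hump a b (real_of_int k - x0) \<le> I 1 k"
proof
  define W where "W = {k::int. x0 < real_of_int k \<and> real_of_int k < x0 + pi / b}"
  have "W \<subseteq> {\<lfloor>x0\<rfloor> .. \<lceil>x0 + pi / b\<rceil>}"
    unfolding W_def by (auto simp: floor_le_iff le_ceiling_iff less_imp_le)
  then have W: "finite W" by (rule finite_subset) simp
  define \<delta> where "\<delta> = Min (insert \<epsilon> ((\<lambda>k. I 1 k) ` W))"
  show "0 < \<delta>" unfolding \<delta>_def using W \<epsilon> I_pos by (subst Min_gr_iff) auto
  show "\<delta> \<le> \<epsilon>" unfolding \<delta>_def using W by simp
  fix k
  show "\<delta> * hump a b (real_of_int k - x0) \<le> I 1 k"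
  proof (cases "k \<in> W")
    case True
    have "\<delta> * hump a b (real_of_int k - x0) \<le> \<delta> * 1"
      using hump_le_1[OF b a] \<open>0 < \<delta>\<close> by (intro mult_left_mono) auto
    also have "\<dots> \<le> I 1 k" unfolding \<delta>_def using W True by simp
    finally show ?thesis .
  next
    case False
    then have "hump a b (real_of_int k - x0) = 0" using hump_outside[OF b] unfolding W_def by auto
    then show ?thesis using I_nonneg[of 1 k] by simp
  qed
qed

lemma standing_hump_subsolution:
  assumes b: "0 < b" "b \<le> pi" and y: "0 < y" "y \<le> V"
  shows "(f V / V - 2 * lam * (1 - cos b)) * y * hump 0 b (real_of_int k - x0)
    \<le> f (y * hump 0 b (real_of_int k - x0)) + I0 k + lam * dlap (\<lambda>k. y * hump 0 b (real_of_int k - x0)) k"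
proof -
  define h where "h = hump 0 b (real_of_int k - x0)"
  have h: "0 \<le> h" "h \<le> 1" unfolding h_def using hump_nonneg[OF b(1)] hump_le_1[OF b(1)] by auto
  have "h * (f V / V * y) \<le> h * f y"
    using f_ratio_antimono[of y V] y h by (intro mult_left_mono) (auto simp: field_simps)
  also have "\<dots> \<le> f (y * h)" using f_mult_ge[of h y] h y by (simp add: mult.commute)
  finally have F: "h * (f V / V * y) \<le> f (y * h)" .
  have "dlap (\<lambda>k. y * hump 0 b (real_of_int k - x0)) k
      = y * (hump 0 b (real_of_int k - x0 - 1) + hump 0 b (real_of_int k - x0 + 1) - 2 * h)"
    unfolding dlap_def h_def by (simp add: algebra_simps)
  moreover have "y * ((2 * cos b - 2) * h)
      \<le> y * (hump 0 b (real_of_int k - x0 - 1) + hump 0 b (real_of_int k - x0 + 1) - 2 * h)"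
    using hump_0_second_difference_ge[OF b, of "real_of_int k - x0"] y unfolding h_def
    by (intro mult_left_mono) auto
  ultimately have "lam * (y * ((2 * cos b - 2) * h)) \<le> lam * dlap (\<lambda>k. y * hump 0 b (real_of_int k - x0)) k"
    using lam_pos by (simp add: mult_left_mono)
  moreover have "(f V / V - 2 * lam * (1 - cos b)) * y * h = h * (f V / V * y) + lam * (y * ((2 * cos b - 2) * h))"
    by (simp add: algebra_simps)
  ultimately show ?thesis using F I0_nonneg[of k] unfolding h_def by linarith
qed

lemma I_ge_growing_hump:
  assumes V: "0 < V" and b: "0 < b" "b \<le> pi" and \<kappa>: "2 * lam * (1 - cos b) < f V / V"
    and \<delta>: "0 < \<delta>" "\<delta> \<le> V" and T: "0 \<le> T"
    and init: "\<And>k. \<delta> * hump 0 b (real_of_int k - x0) \<le> I T k"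
  shows "V * hump 0 b (real_of_int j - x0) \<le> I (T + (V - \<delta>) / ((f V / V - 2 * lam * (1 - cos b)) * \<delta>)) j"
proof -
  define \<kappa> where "\<kappa> = f V / V - 2 * lam * (1 - cos b)"
  define m where "m = \<kappa> * \<delta>"
  define \<tau>1 where "\<tau>1 = (V - \<delta>) / m"
  define y where "y s = \<delta> + m * (s - T)" for s
  have \<kappa>_pos: "0 < \<kappa>" and m: "0 < m" using \<kappa> \<delta> unfolding m_def \<kappa>_def by simp_all
  have \<tau>1: "0 \<le> \<tau>1" and yT: "y (T + \<tau>1) = V" unfolding \<tau>1_def y_def using m \<delta> by simp_all
  have y: "\<delta> \<le> y s \<and> y s \<le> V" if "T \<le> s" "s \<le> T + \<tau>1" for s
  proof -
    have "0 \<le> m * (s - T)" using that m by simp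
    moreover have "m * (s - T) \<le> m * \<tau>1" using that m by (intro mult_left_mono) auto
    moreover have "\<delta> + m * \<tau>1 = V" using yT unfolding y_def by simp
    ultimately show ?thesis unfolding y_def by linarith
  qed
  have "y (T + \<tau>1) * hump 0 b (real_of_int j - x0) \<le> I (T + \<tau>1) j"
  proof (rule comparison[where u = "\<lambda>s k. y s * hump 0 b (real_of_int k - x0)" and v = I
        and ta = T and tb = "T + \<tau>1" and M = V])
    show "continuous_on {T..T + \<tau>1} (\<lambda>s. y s * hump 0 b (real_of_int k - x0))" for k
      unfolding y_def by (intro continuous_intros)
    show "continuous_on {T..T + \<tau>1} (\<lambda>s. I s k)" for k using T by (intro I_continuous_on)
    show "y T * hump 0 b (real_of_int k - x0) \<le> I T k" for k using init[of k] unfolding y_def by simp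
    show "y s * hump 0 b (real_of_int k - x0) - I s k \<le> V" if "T \<le> s" "s \<le> T + \<tau>1" for k s
    proof -
      have "y s * hump 0 b (real_of_int k - x0) \<le> V * 1"
        using y[OF that] \<delta> hump_nonneg[OF b(1)] hump_le_1[OF b(1)] by (intro mult_mono) auto
      then show ?thesis using I_nonneg[of s k] T that by simp
    qed
    show "0 \<le> I s k" if "T < s" for k s using I_nonneg T that by simp
    fix k s assume s: "T < s" "s \<le> T + \<tau>1"
    show "\<exists>d. ((\<lambda>s. I s k) has_real_derivative d) (at s) \<and> f (I s k) + I0 k + lam * dlap (I s) k \<le> d"
      using I_supersolution s T by simp
    have "((\<lambda>s. y s * hump 0 b (real_of_int k - x0)) has_real_derivative m * hump 0 b (real_of_int k - x0)) (at s)"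
      unfolding y_def by (auto intro!: derivative_eq_intros)
    moreover have "m * hump 0 b (real_of_int k - x0) \<le> \<kappa> * y s * hump 0 b (real_of_int k - x0)"
      using y[of s] s \<kappa>_pos hump_nonneg[OF b(1)] unfolding m_def
      by (intro mult_right_mono mult_left_mono) auto
    moreover have "\<kappa> * y s * hump 0 b (real_of_int k - x0) \<le> f (y s * hump 0 b (real_of_int k - x0))
        + I0 k + lam * dlap (\<lambda>k. y s * hump 0 b (real_of_int k - x0)) k"
      unfolding \<kappa>_def using standing_hump_subsolution[OF b, of "y s" V] y[of s] s \<delta> by simp
    ultimately show "\<exists>d. ((\<lambda>s. y s * hump 0 b (real_of_int k - x0)) has_real_derivative d) (at s) \<and>
        d \<le> f (y s * hump 0 b (real_of_int k - x0)) + I0 k + lam * dlap (\<lambda>k. y s * hump 0 b (real_of_int k - x0)) k"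
      by (blast intro: order_trans)
  qed (use \<tau>1 in simp_all)
  then show ?thesis using yT unfolding \<tau>1_def m_def \<kappa>_def by simp
qed

lemma I_ge_at_hump_top:
  assumes V: "0 < V" and b: "0 < b" "b \<le> pi" and \<kappa>: "2 * lam * (1 - cos b) < f V / V"
    and \<delta>: "0 < \<delta>" "\<delta> \<le> V" and T: "0 \<le> T"
    and init: "\<And>k. \<delta> * hump 0 b (real_of_int k - (real_of_int j - pi / (2 * b))) \<le> I T k"
    and t: "T + (V - \<delta>) / ((f V / V - 2 * lam * (1 - cos b)) * \<delta>) \<le> t"
  shows "V \<le> I t j"
proof -
  have "V * hump 0 b (real_of_int j - (real_of_int j - pi / (2 * b)))
      \<le> I (T + (V - \<delta>) / ((f V / V - 2 * lam * (1 - cos b)) * \<delta>)) j"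
    by (rule I_ge_growing_hump[OF V b \<kappa> \<delta> T init])
  also have "\<dots> \<le> I t j"
    using t T \<delta> \<kappa> by (intro I_mono) (auto intro!: divide_nonneg_pos)
  finally show ?thesis using hump_0_top[OF b(1)] by simp
qed

lemma moving_hump_subsolution:
  assumes a: "0 \<le> a" and b: "0 < b" "b \<le> pi"
    and hb: "c1 * b = lam * (exp a - exp (- a)) * sin b"
    and ha: "c1 * a \<le> r' + lam * ((exp a + exp (- a)) * cos b - 2)"
    and \<delta>1: "0 < \<delta>1" and hf: "\<And>v. 0 \<le> v \<Longrightarrow> v \<le> \<delta>1 \<Longrightarrow> r' * v \<le> f v"
    and x: "0 < x" "x < pi / b"
  shows "\<delta>1 * (exp (- a * x) * c1 * (a * sin (b * x) - b * cos (b * x)))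
    \<le> f (\<delta>1 * hump a b x) + I0 k + lam * (\<delta>1 * (hump a b (x - 1) + hump a b (x + 1) - 2 * hump a b x))"
proof -
  define E where "E = exp (- a * x)"
  define S where "S = sin (b * x)"
  define C where "C = cos (b * x)"
  define N where "N = (exp a + exp (- a)) * cos b * S - (exp a - exp (- a)) * sin b * C"
  have S: "0 \<le> S" unfolding S_def using x b by (intro sin_ge_zero) (auto simp: field_simps)
  have h: "hump a b x = E * S" unfolding E_def S_def using hump_inside[OF b(1) x] .
  have "E * N \<le> hump a b (x - 1) + hump a b (x + 1)"
    unfolding E_def N_def S_def C_def using hump_neighbours_ge[OF b x] .
  then have "lam * (\<delta>1 * (E * N - 2 * (E * S)))
      \<le> lam * (\<delta>1 * (hump a b (x - 1) + hump a b (x + 1) - 2 * hump a b x))"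
    using lam_pos \<delta>1 h by (intro mult_left_mono) auto
  moreover have "r' * (\<delta>1 * (E * S)) \<le> f (\<delta>1 * hump a b x)"
    unfolding h[symmetric] using hf hump_nonneg[OF b(1)] hump_le_1[OF b(1) a] \<delta>1
    by (simp add: mult_le_cancel_left1)
  moreover have "0 \<le> (r' + lam * ((exp a + exp (- a)) * cos b - 2) - c1 * a) * (\<delta>1 * E * S)"
    using ha \<delta>1 S unfolding E_def by simp
  moreover have "r' * (\<delta>1 * (E * S)) + lam * (\<delta>1 * (E * N - 2 * (E * S)))
      - \<delta>1 * (E * c1 * (a * S - b * C))
    = (r' + lam * ((exp a + exp (- a)) * cos b - 2) - c1 * a) * (\<delta>1 * E * S)
      + \<delta>1 * E * C * (c1 * b - lam * (exp a - exp (- a)) * sin b)"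
    unfolding N_def by (simp add: algebra_simps)
  ultimately show ?thesis using hb I0_nonneg[of k] unfolding E_def S_def C_def by simp
qed

lemma I_ge_moving_hump:
  assumes a: "0 \<le> a" and b: "0 < b" "b \<le> pi"
    and hb: "c1 * b = lam * (exp a - exp (- a)) * sin b"
    and ha: "c1 * a \<le> r' + lam * ((exp a + exp (- a)) * cos b - 2)"
    and \<delta>1: "0 < \<delta>1" and hf: "\<And>v. 0 \<le> v \<Longrightarrow> v \<le> \<delta>1 \<Longrightarrow> r' * v \<le> f v"
    and t0: "0 \<le> t0" and init: "\<And>k. \<delta>1 * hump a b (real_of_int k - c1 * t0) \<le> I t0 k"
    and t: "t0 \<le> t"
  shows "\<delta>1 * hump a b (real_of_int j - c1 * t) \<le> I t j"
proof (rule comparison[where u = "\<lambda>s k. \<delta>1 * hump a b (real_of_int k - c1 * s)" and v = I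
      and ta = t0 and tb = t and M = \<delta>1])
  show "continuous_on {t0..t} (\<lambda>s. \<delta>1 * hump a b (real_of_int k - c1 * s))" for k
    by (intro continuous_intros continuous_on_hump)
  show "continuous_on {t0..t} (\<lambda>s. I s k)" for k using t0 by (rule I_continuous_on)
  show "\<delta>1 * hump a b (real_of_int k - c1 * s) - I s k \<le> \<delta>1" if "t0 \<le> s" "s \<le> t" for k s
    using mult_left_mono[OF hump_le_1[OF b(1) a, of "real_of_int k - c1 * s"] less_imp_le[OF \<delta>1]]
      I_nonneg[of s k] t0 that
    by simp
  show "0 \<le> I s k" if "t0 < s" for k s using I_nonneg t0 that by simp
  fix k s assume s: "t0 < s" "s \<le> t" "I s k < \<delta>1 * hump a b (real_of_int k - c1 * s)"
  show "\<exists>d. ((\<lambda>s. I s k) has_real_derivative d) (at s) \<and> f (I s k) + I0 k + lam * dlap (I s) k \<le> d"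
    using I_supersolution s t0 by simp
  define x where "x = real_of_int k - c1 * s"
  have "0 \<le> I s k" using I_nonneg t0 s by simp
  then have "0 < \<delta>1 * hump a b x" using s(3) unfolding x_def by linarith
  then have "0 < hump a b x" using \<delta>1 by (simp add: zero_less_mult_iff)
  then have x: "0 < x" "x < pi / b" using hump_pos_imp_inside[OF b(1)] by auto
  have "((\<lambda>s. hump a b (real_of_int k - c1 * s)) has_real_derivative
      exp (- a * x) * c1 * (a * sin (b * x) - b * cos (b * x))) (at s)"
    unfolding x_def by (rule has_real_derivative_moving_hump) (use b x in \<open>simp_all add: x_def\<close>)
  then have "((\<lambda>s. \<delta>1 * hump a b (real_of_int k - c1 * s)) has_real_derivative
      \<delta>1 * (exp (- a * x) * c1 * (a * sin (b * x) - b * cos (b * x)))) (at s)"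
    by (rule DERIV_cmult)
  moreover have "dlap (\<lambda>k. \<delta>1 * hump a b (real_of_int k - c1 * s)) k
      = \<delta>1 * (hump a b (x - 1) + hump a b (x + 1) - 2 * hump a b x)"
    unfolding dlap_def x_def by (simp add: algebra_simps)
  then have "\<delta>1 * (exp (- a * x) * c1 * (a * sin (b * x) - b * cos (b * x)))
      \<le> f (\<delta>1 * hump a b (real_of_int k - c1 * s)) + I0 k
        + lam * dlap (\<lambda>k. \<delta>1 * hump a b (real_of_int k - c1 * s)) k"
    using moving_hump_subsolution[OF a b hb ha \<delta>1 hf x, of k] unfolding x_def by simp
  ultimately show "\<exists>d. ((\<lambda>s. \<delta>1 * hump a b (real_of_int k - c1 * s)) has_real_derivative d) (at s) \<and>
      d \<le> f (\<delta>1 * hump a b (real_of_int k - c1 * s)) + I0 k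
        + lam * dlap (\<lambda>k. \<delta>1 * hump a b (real_of_int k - c1 * s)) k"
    by blast
qed (use t t0 init in simp_all)

text \<open>
  As \<open>b \<rightarrow> 0\<close> the constraints on a moving hump \<open>exp (- a x) sin (b x)\<close> of speed \<open>c1\<close> degenerate into
  \<open>c1 = \<lambda> (exp a - exp (- a))\<close> and \<open>c1 a < r + \<lambda> lap_exp_factor a\<close>. At the \<open>a0\<close> where the first gives
  \<open>c1 = c\<close>, the second holds because otherwise \<open>c\<^sub>* \<le> (r + \<lambda> lap_exp_factor a0) / a0 \<le> c\<close>;
  a slightly larger \<open>a\<close> then gives \<open>c1 > c\<close>.
\<close>
lemma ex_decay_rate:
  assumes c: "0 < c" "c < c_star s0 \<tau> \<eta> lam"
  obtains a where "0 < a" "c < lam * (exp a - exp (- a))"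
    "a * (lam * (exp a - exp (- a))) - lam * lap_exp_factor a < r"
proof -
  define g where "g a = lam * (exp a - exp (- a))" for a :: real
  define h where "h a = a * g a - lam * lap_exp_factor a" for a :: real
  have "1 + c / lam \<le> exp (c / lam)" by (rule exp_ge_add_one_self)
  moreover have "exp (- (c / lam)) \<le> 1" using c lam_pos by simp
  ultimately have "c / lam \<le> exp (c / lam) - exp (- (c / lam))" by linarith
  then have "c \<le> g (c / lam)" unfolding g_def using lam_pos by (simp add: field_simps)
  moreover have "continuous_on {0..c / lam} g" unfolding g_def by (intro continuous_intros)
  ultimately obtain a0 where a0: "0 \<le> a0" "g a0 = c"
    using IVT'[of g 0 c "c / lam"] c lam_pos unfolding g_def by auto
  then have a0_pos: "0 < a0" using c unfolding g_def by (cases "a0 = 0") auto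
  have "h a0 < r"
  proof (rule ccontr)
    assume "\<not> h a0 < r"
    then have "(r + lam * lap_exp_factor a0) / a0 \<le> c"
      using a0 a0_pos unfolding h_def by (simp add: field_simps)
    moreover have "c_star s0 \<tau> \<eta> lam \<le> (r + lam * lap_exp_factor a0) / a0"
      unfolding c_star_eq
    proof (rule cINF_lower)
      show "bdd_below ((\<lambda>\<gamma>. (r + lam * lap_exp_factor \<gamma>) / \<gamma>) ` {0<..})"
        using r_pos lam_pos lap_exp_factor_nonneg by (intro bdd_belowI[of _ 0]) auto
    qed (use a0_pos in simp)
    ultimately show False using c by simp
  qed
  moreover have "isCont h a0" unfolding h_def g_def lap_exp_factor_def by (intro continuous_intros)
  ultimately have "\<forall>\<^sub>F a in at_right a0. h a < r"
    by (intro order_tendstoD(2)[OF tendsto_mono[OF at_le]]) (auto simp: isCont_def)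
  then obtain a where a: "h a < r" "a0 < a"
    using eventually_happens'[OF _ eventually_conj[OF _ eventually_at_right_less]] by force
  have "exp a0 < exp a" "exp (- a) < exp (- a0)" using a(2) by simp_all
  then have "exp a0 - exp (- a0) < exp a - exp (- a)" by linarith
  then have "lam * (exp a0 - exp (- a0)) < lam * (exp a - exp (- a))"
    using lam_pos by (rule mult_strict_left_mono)
  then have "c < g a" using a0 unfolding g_def by simp
  then show thesis using that[of a] a a0_pos unfolding h_def g_def by simp
qed

lemma ex_speed_parameters:
  assumes c: "0 < c" "c < c_star s0 \<tau> \<eta> lam" and \<kappa>: "0 < \<kappa>"
  obtains a b c1 r' \<delta>1 where "0 \<le> a" "0 < b" "b \<le> pi" "c < c1"
    "c1 * b = lam * (exp a - exp (- a)) * sin b"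
    "c1 * a \<le> r' + lam * ((exp a + exp (- a)) * cos b - 2)"
    "2 * lam * (1 - cos b) < \<kappa>" "0 < \<delta>1" "\<And>v. 0 \<le> v \<Longrightarrow> v \<le> \<delta>1 \<Longrightarrow> r' * v \<le> f v"
proof -
  obtain a where a: "0 < a" "c < lam * (exp a - exp (- a))"
    "a * (lam * (exp a - exp (- a))) - lam * lap_exp_factor a < r"
    using ex_decay_rate[OF c] by blast
  define g where "g = lam * (exp a - exp (- a))"
  define r' where "r' = (a * g - lam * lap_exp_factor a + r) / 2"
  have r': "a * g - lam * lap_exp_factor a < r'" "r' < r" using a(3) unfolding r'_def g_def by auto
  have "(sin has_real_derivative cos 0) (at 0)" by (rule DERIV_sin)
  then have "((\<lambda>b. sin b / b) \<longlongrightarrow> 1) (at (0::real))"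
    unfolding has_field_derivative_iff by simp
  then have sinc: "((\<lambda>b. sin b / b) \<longlongrightarrow> 1) (at_right (0::real))"
    by (rule tendsto_mono[OF at_le, rotated]) auto
  have "((\<lambda>b. b) \<longlongrightarrow> 0) (at_right (0::real))" by (rule tendsto_ident_at)
  then have "\<forall>\<^sub>F b in at_right 0. b < pi" by (rule order_tendstoD) simp
  moreover have "((\<lambda>b. g * (sin b / b)) \<longlongrightarrow> g * 1) (at_right 0)" by (intro tendsto_intros sinc)
  then have "\<forall>\<^sub>F b in at_right 0. c < g * (sin b / b)" using a(2) unfolding g_def by (intro order_tendstoD) auto
  moreover have "((\<lambda>b. g * (sin b / b) * a - lam * ((exp a + exp (- a)) * cos b - 2))
      \<longlongrightarrow> g * 1 * a - lam * ((exp a + exp (- a)) * cos 0 - 2)) (at_right 0)"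
    by (intro tendsto_intros sinc)
  then have "\<forall>\<^sub>F b in at_right 0. g * (sin b / b) * a - lam * ((exp a + exp (- a)) * cos b - 2) < r'"
    using r'(1) by (intro order_tendstoD) (auto simp: lap_exp_factor_def algebra_simps)
  moreover have "((\<lambda>b. 2 * lam * (1 - cos b)) \<longlongrightarrow> 2 * lam * (1 - cos 0)) (at_right (0::real))"
    by (intro tendsto_intros)
  then have "\<forall>\<^sub>F b in at_right 0. 2 * lam * (1 - cos b) < \<kappa>" using \<kappa> by (intro order_tendstoD) auto
  ultimately have "\<forall>\<^sub>F b in at_right 0. 0 < b \<and> b < pi \<and> c < g * (sin b / b) \<and>
      g * (sin b / b) * a - lam * ((exp a + exp (- a)) * cos b - 2) < r' \<and> 2 * lam * (1 - cos b) < \<kappa>"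
    using eventually_at_right_less by eventually_elim auto
  then obtain b where b: "0 < b" "b < pi" "c < g * (sin b / b)"
    "g * (sin b / b) * a - lam * ((exp a + exp (- a)) * cos b - 2) < r'" "2 * lam * (1 - cos b) < \<kappa>"
    using eventually_happens'[of "at_right (0::real)"] by auto
  obtain \<delta>1 where "0 < \<delta>1" "\<And>v. 0 \<le> v \<Longrightarrow> v \<le> \<delta>1 \<Longrightarrow> r' * v \<le> f v"
    using f_ge_linear_near_0[OF r'(2)] by blast
  moreover have "g * (sin b / b) * b = lam * (exp a - exp (- a)) * sin b" using b unfolding g_def by simp
  ultimately show thesis
    using that[of a b "g * (sin b / b)" r' \<delta>1] a(1) b by (simp add: algebra_simps)
qed

lemma I_ge_on_right_cone:
  assumes V: "0 < V" "V < v_star" and c: "0 < c" "c < c_star s0 \<tau> \<eta> lam"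
  obtains T0 J0 where "\<And>t j. T0 \<le> t \<Longrightarrow> J0 \<le> real_of_int j \<Longrightarrow> real_of_int j \<le> c * t \<Longrightarrow> V \<le> I t j"
proof -
  have \<kappa>: "0 < f V / V" using f_ratio_pos_below_v_star V by simp
  obtain a b c1 r' \<delta>1' where a: "0 \<le> a" and b: "0 < b" "b \<le> pi" and c1: "c < c1"
    and hb: "c1 * b = lam * (exp a - exp (- a)) * sin b"
    and ha: "c1 * a \<le> r' + lam * ((exp a + exp (- a)) * cos b - 2)"
    and bk: "2 * lam * (1 - cos b) < f V / V" and \<delta>1': "0 < \<delta>1'"
    and hf': "\<And>v. 0 \<le> v \<Longrightarrow> v \<le> \<delta>1' \<Longrightarrow> r' * v \<le> f v"
    using ex_speed_parameters[OF c \<kappa>] by blast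
  have c1_pos: "0 < c1" using c c1 by simp
  obtain \<delta>1 where \<delta>1: "0 < \<delta>1" "\<delta>1 \<le> \<delta>1'" and init: "\<And>k. \<delta>1 * hump a b (real_of_int k - c1) \<le> I 1 k"
    using I_1_ge_hump[OF b(1) a \<delta>1'] by blast
  have moving: "\<delta>1 * hump a b (real_of_int k - c1 * t) \<le> I t k" if "1 \<le> t" for t k
    by (rule I_ge_moving_hump[OF a b hb ha \<delta>1(1) _ _ _ that]) (use hf' \<delta>1 init in auto)
  define \<delta> where "\<delta> = min (\<delta>1 * exp (- a * (pi / b))) V"
  have \<delta>: "0 < \<delta>" "\<delta> \<le> V" unfolding \<delta>_def using \<delta>1 V by auto
  have standing: "\<delta> * hump 0 b (real_of_int k - c1 * t) \<le> I t k" if "1 \<le> t" for t k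
  proof -
    have "\<delta> * hump 0 b (real_of_int k - c1 * t) \<le> \<delta>1 * (exp (- a * (pi / b)) * hump 0 b (real_of_int k - c1 * t))"
      unfolding \<delta>_def using hump_nonneg[OF b(1)] by (simp add: mult.assoc[symmetric] mult_right_mono)
    also have "\<dots> \<le> \<delta>1 * hump a b (real_of_int k - c1 * t)"
      using hump_ge_scaled_hump_0[OF b(1) a] \<delta>1 by (intro mult_left_mono) auto
    also have "\<dots> \<le> I t k" using moving[OF that, of k] by simp
    finally show ?thesis .
  qed
  define \<tau>1 where "\<tau>1 = (V - \<delta>) / ((f V / V - 2 * lam * (1 - cos b)) * \<delta>)"
  show thesis
  proof (rule that[of "\<tau>1 * c1 / (c1 - c)" "c1 + pi / (2 * b)"])
    fix t j assume t: "\<tau>1 * c1 / (c1 - c) \<le> t"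
      and j: "c1 + pi / (2 * b) \<le> real_of_int j" "real_of_int j \<le> c * t"
    define s where "s = (real_of_int j - pi / (2 * b)) / c1"
    have s: "1 \<le> s" "c1 * s = real_of_int j - pi / (2 * b)"
      unfolding s_def using j c1_pos by (simp_all add: field_simps)
    have "0 \<le> pi / (2 * b)" using b by simp
    then have "s \<le> c * t / c1" unfolding s_def using j c1_pos by (intro divide_right_mono) auto
    moreover have "\<tau>1 \<le> t - c * t / c1"
      using t c1 c1_pos by (simp add: field_simps)
    ultimately have "s + \<tau>1 \<le> t" by linarith
    then show "V \<le> I t j"
      using I_ge_at_hump_top[OF V(1) b bk \<delta>, of s j t] standing[OF s(1)] s unfolding \<tau>1_def by simp
  qed
qed

lemma lattice_epidemic_reflect:
  "lattice_epidemic s0 \<tau> \<eta> lam (\<lambda>j. I0 (- j)) (\<lambda>j. Iinf (- j)) (\<lambda>t j. I t (- j))"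
proof unfold_locales
  have "{j. I0 (- j) \<noteq> 0} = uminus ` {j. I0 j \<noteq> 0}" by (force simp: image_iff)
  then show "finite {j. I0 (- j) \<noteq> 0}" using I0_fin by simp
  show "\<exists>j. 0 < I0 (- j)" using I0_nz by (metis minus_minus)
  show "bounded (range (\<lambda>j. Iinf (- j)))" by (rule bounded_subset[OF Iinf_bdd]) auto
  show "bounded {I t (- j) |t j. 0 \<le> t \<and> t \<le> T}" for T by (rule bounded_subset[OF I_bdd[of T]]) blast
  show "((\<lambda>s. I s (- j)) has_real_derivative f (I t (- j)) + I0 (- j) + lam * dlap (\<lambda>j. I t (- j)) j) (at t)"
    if "0 < t" for j t
    using I_ode[OF that, of "- j"] by (simp add: dlap_reflect)
qed (use s0_pos \<tau>_pos \<eta>_pos R0_gt_1 lam_pos I0_nonneg Iinf_pos Iinf_eq I_cont I_init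
  in \<open>simp_all add: dlap_reflect\<close>)

lemma I_ge_on_cone:
  assumes V: "0 < V" "V < v_star" and c: "0 < c" "c < c_star s0 \<tau> \<eta> lam"
  obtains T0 J0 where
    "\<And>t j. T0 \<le> t \<Longrightarrow> J0 \<le> real_of_int \<bar>j\<bar> \<Longrightarrow> real_of_int \<bar>j\<bar> \<le> c * t \<Longrightarrow> V \<le> I t j"
proof -
  interpret reflected: lattice_epidemic s0 \<tau> \<eta> lam "\<lambda>j. I0 (- j)" "\<lambda>j. Iinf (- j)" "\<lambda>t j. I t (- j)"
    by (rule lattice_epidemic_reflect)
  obtain T1 J1 where right: "\<And>t j. T1 \<le> t \<Longrightarrow> J1 \<le> real_of_int j \<Longrightarrow> real_of_int j \<le> c * t \<Longrightarrow> V \<le> I t j"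
    using I_ge_on_right_cone[OF V c] by blast
  obtain T2 J2 where left: "\<And>t j. T2 \<le> t \<Longrightarrow> J2 \<le> real_of_int j \<Longrightarrow> real_of_int j \<le> c * t \<Longrightarrow> V \<le> I t (- j)"
    using reflected.I_ge_on_right_cone[OF V c] by blast
  show thesis
  proof (rule that[of "max T1 T2" "max J1 J2"])
    fix t j assume "max T1 T2 \<le> t" "max J1 J2 \<le> real_of_int \<bar>j\<bar>" "real_of_int \<bar>j\<bar> \<le> c * t"
    then show "V \<le> I t j" using right[of t j] left[of t "- j"] by (cases "0 \<le> j") auto
  qed
qed

end

section \<open>Convergence to the stationary state\<close>

context lattice_epidemic
begin

lemma I_eventually_ge:
  assumes V: "0 < V" "V < v_star"
  obtains T where "\<And>t. T \<le> t \<Longrightarrow> V \<le> I t j"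
proof -
  have \<kappa>: "0 < f V / V" using f_ratio_pos_below_v_star V by simp
  have "((\<lambda>b. b) \<longlongrightarrow> 0) (at_right (0::real))" by (rule tendsto_ident_at)
  then have "\<forall>\<^sub>F b in at_right 0. b < pi" by (rule order_tendstoD) simp
  moreover have "((\<lambda>b. 2 * lam * (1 - cos b)) \<longlongrightarrow> 2 * lam * (1 - cos 0)) (at_right (0::real))"
    by (intro tendsto_intros)
  then have "\<forall>\<^sub>F b in at_right 0. 2 * lam * (1 - cos b) < f V / V" using \<kappa> by (intro order_tendstoD) auto
  ultimately have "\<forall>\<^sub>F b in at_right 0. 0 < b \<and> b < pi \<and> 2 * lam * (1 - cos b) < f V / V"
    using eventually_at_right_less by eventually_elim auto
  then obtain b where b: "0 < b" "b \<le> pi" and bk: "2 * lam * (1 - cos b) < f V / V"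
    using eventually_happens'[of "at_right (0::real)"] by force
  obtain \<delta> where \<delta>: "0 < \<delta>" "\<delta> \<le> V"
    and init: "\<And>k. \<delta> * hump 0 b (real_of_int k - (real_of_int j - pi / (2 * b))) \<le> I 1 k"
    using I_1_ge_hump[OF b(1) order_refl V(1)] by blast
  show thesis
    by (rule that, rule I_ge_at_hump_top[OF V(1) b bk \<delta> _ init]) simp_all
qed

definition I_lim :: "int \<Rightarrow> real" where
  "I_lim j = (SUP n. I (real n) j)"

lemma I_lim_tendsto: "(\<lambda>n. I (real n) j) \<longlonglongrightarrow> I_lim j"
proof -
  have "bdd_above (range (\<lambda>n. I (real n) j))" using I_le_Iinf by (intro bdd_aboveI[of _ "Iinf j"]) auto
  moreover have "incseq (\<lambda>n. I (real n) j)" by (rule incseq_SucI) (simp add: I_mono)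
  ultimately show ?thesis unfolding I_lim_def by (rule LIMSEQ_incseq_SUP)
qed

lemma I_le_I_lim:
  assumes "0 \<le> t"
  shows "I t j \<le> I_lim j"
proof -
  have "I t j \<le> I (real (nat \<lceil>t\<rceil>)) j" using assms by (intro I_mono) auto
  also have "\<dots> \<le> I_lim j"
    by (rule LIMSEQ_le_const[OF I_lim_tendsto]) (auto intro!: exI[of _ "nat \<lceil>t\<rceil>"] I_mono)
  finally show ?thesis .
qed

lemma I_lim_le_Iinf: "I_lim j \<le> Iinf j"
  by (rule LIMSEQ_le_const2[OF I_lim_tendsto]) (intro exI[of _ 0] allI impI I_le_Iinf; simp)

lemma v_star_le_I_lim: "v_star \<le> I_lim j"
proof (rule ccontr)
  assume "\<not> v_star \<le> I_lim j"
  define V where "V = (max (I_lim j) (v_star / 2) + v_star) / 2"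
  have V: "0 < V" "V < v_star" "I_lim j < V" unfolding V_def using \<open>\<not> v_star \<le> I_lim j\<close> v_star by auto
  obtain T where "\<And>t. T \<le> t \<Longrightarrow> V \<le> I t j" using I_eventually_ge[OF V(1,2)] by blast
  then have "V \<le> I (max T 0) j" by simp
  also have "\<dots> \<le> I_lim j" by (rule I_le_I_lim) simp
  finally show False using V by simp
qed

lemma I_tendsto_I_lim_between:
  assumes "\<And>n. real n \<le> \<xi> n" "\<And>n. \<xi> n \<le> real n + 1"
  shows "(\<lambda>n. I (\<xi> n) k) \<longlonglongrightarrow> I_lim k"
proof (rule tendsto_sandwich[OF _ _ I_lim_tendsto LIMSEQ_Suc[OF I_lim_tendsto]])
  show "\<forall>\<^sub>F n in sequentially. I (real n) k \<le> I (\<xi> n) k"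
    using assms by (intro always_eventually allI I_mono) auto
  show "\<forall>\<^sub>F n in sequentially. I (\<xi> n) k \<le> I (real (Suc n)) k"
  proof (intro always_eventually allI)
    fix n
    have "0 \<le> \<xi> n" using assms(1)[of n] by linarith
    then show "I (\<xi> n) k \<le> I (real (Suc n)) k" using assms(2)[of n] by (intro I_mono) auto
  qed
qed

text \<open>By the mean value theorem the increments \<open>I (n + 1) - I n \<rightarrow> 0\<close> are values of the
  right-hand side at times \<open>\<xi> n \<in> (n, n + 1)\<close>, and these converge to the right-hand side at \<open>I_lim\<close>.\<close>
lemma I_lim_stationary: "0 = f (I_lim j) + I0 j + lam * dlap I_lim j"
proof -
  define F where "F t = f (I t j) + I0 j + lam * dlap (I t) j" for t
  have "\<exists>\<xi>. real n < \<xi> \<and> \<xi> < real n + 1 \<and> I (real n + 1) j - I (real n) j = F \<xi>" for n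
  proof -
    have "continuous_on {real n..real n + 1} (\<lambda>t. I t j)" by (rule I_continuous_on) simp
    moreover have "(\<lambda>t. I t j) differentiable at x" if "real n < x" for x
      using I_ode[of x j] that real_differentiable_def by (metis of_nat_0_le_iff le_less_trans)
    ultimately obtain l z where z: "real n < z" "z < real n + 1"
      "((\<lambda>t. I t j) has_real_derivative l) (at z)" "I (real n + 1) j - I (real n) j = (real n + 1 - real n) * l"
      using MVT[of "real n" "real n + 1" "\<lambda>t. I t j"] by auto
    have "l = F z" unfolding F_def
      using DERIV_unique[OF z(3) I_ode[of z j]] z(1) by (metis of_nat_0_le_iff le_less_trans)
    then show ?thesis using z by auto
  qed
  then obtain \<xi> where \<xi>: "\<And>n. real n < \<xi> n" "\<And>n. \<xi> n < real n + 1"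
    and incr: "\<And>n. I (real n + 1) j - I (real n) j = F (\<xi> n)"
    by metis
  have "(\<lambda>n. F (\<xi> n)) \<longlonglongrightarrow> f (I_lim j) + I0 j + lam * dlap I_lim j"
    unfolding F_def dlap_def using \<xi>
    by (intro tendsto_intros I_tendsto_I_lim_between isCont_tendsto_compose[OF isCont_f])
      (auto intro: less_imp_le)
  moreover have "(\<lambda>n. F (\<xi> n)) = (\<lambda>n. I (real (Suc n)) j - I (real n) j)"
    using incr by (simp add: add.commute)
  then have "(\<lambda>n. F (\<xi> n)) \<longlonglongrightarrow> I_lim j - I_lim j"
    by (simp only:) (intro tendsto_intros LIMSEQ_Suc I_lim_tendsto)
  ultimately show ?thesis using LIMSEQ_unique by fastforce
qed

lemma I_lim_far_above:
  assumes q: "0 \<le> q" "q < 1"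
  obtains R where "\<And>k. R \<le> real_of_int \<bar>k\<bar> \<Longrightarrow> q * Iinf k < I_lim k"
proof -
  define e where "e = v_star * (1 - q)"
  have "0 < e" unfolding e_def using q v_star by simp
  then obtain R where R: "\<And>k. R \<le> real_of_int \<bar>k\<bar> \<Longrightarrow> Iinf k \<le> v_star + e"
    using Iinf_tail_le by blast
  have "v_star - q * (v_star + e) = v_star * (1 - q) ^ 2"
    unfolding e_def by (simp add: algebra_simps power2_eq_square)
  moreover have "0 < v_star * (1 - q) ^ 2" using q v_star by simp
  ultimately have less: "q * (v_star + e) < v_star" by linarith
  show thesis
  proof (rule that)
    fix k assume "R \<le> real_of_int \<bar>k\<bar>"
    then have "q * Iinf k \<le> q * (v_star + e)" using R q by (intro mult_left_mono) auto
    then show "q * Iinf k < I_lim k" using less v_star_le_I_lim[of k] by linarith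
  qed
qed

text \<open>Far out \<open>I_lim / Iinf\<close> is close to \<open>1\<close>, so where it drops below \<open>1\<close> it attains its minimum.\<close>
lemma I_lim_ratio_min:
  assumes "I_lim j < Iinf j"
  obtains m jm where "0 < m" "m < 1" "\<And>k. m * Iinf k \<le> I_lim k" "I_lim jm = m * Iinf jm"
proof -
  define \<rho> where "\<rho> k = I_lim k / Iinf k" for k
  have \<rho>_pos: "0 < \<rho> k" for k unfolding \<rho>_def using v_star_le_I_lim[of k] v_star Iinf_pos[of k] by simp
  have \<rho>j: "\<rho> j < 1" unfolding \<rho>_def using assms Iinf_pos[of j] by simp
  obtain R where R: "\<And>k. R \<le> real_of_int \<bar>k\<bar> \<Longrightarrow> \<rho> j * Iinf k < I_lim k"
    using I_lim_far_above[OF less_imp_le[OF \<rho>_pos] \<rho>j] by blast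
  have far: "\<rho> j < \<rho> k" if "R \<le> real_of_int \<bar>k\<bar>" for k
    using R[OF that] Iinf_pos[of k] by (simp add: \<rho>_def[of k] pos_less_divide_eq)
  define W where "W = {k::int. real_of_int \<bar>k\<bar> < R}"
  have "W \<subseteq> {- \<lceil>R\<rceil> .. \<lceil>R\<rceil>}" unfolding W_def by (auto simp: abs_less_iff) linarith+
  then have W: "finite W" by (rule finite_subset) simp
  have jW: "j \<in> W" using far[of j] unfolding W_def by force
  define m where "m = Min (\<rho> ` W)"
  have "m \<in> \<rho> ` W" unfolding m_def using W jW by (intro Min_in) auto
  then obtain jm where jm: "jm \<in> W" "\<rho> jm = m" by blast
  have m_le: "m \<le> \<rho> k" for k
  proof (cases "k \<in> W")
    case True
    then show ?thesis unfolding m_def using W by simp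
  next
    case False
    then have "\<rho> j < \<rho> k" using far unfolding W_def by force
    moreover have "m \<le> \<rho> j" unfolding m_def using W jW by simp
    ultimately show ?thesis by simp
  qed
  show thesis
  proof (rule that[of m jm])
    show "0 < m" using jm \<rho>_pos by metis
    show "m < 1" using m_le[of j] \<rho>j by simp
    show "m * Iinf k \<le> I_lim k" for k using m_le[of k] Iinf_pos[of k] unfolding \<rho>_def by (simp add: field_simps)
    show "I_lim jm = m * Iinf jm" using jm(2) Iinf_pos[of jm] unfolding \<rho>_def by (simp add: field_simps)
  qed
qed

text \<open>At the minimum point the stationary equations for \<open>I_lim\<close> and \<open>Iinf\<close> contradict the strict
  inequality \<open>f (m v) > m f v\<close>.\<close>
lemma I_lim_eq_Iinf: "I_lim j = Iinf j"
proof (rule ccontr)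
  assume "I_lim j \<noteq> Iinf j"
  then have "I_lim j < Iinf j" using I_lim_le_Iinf[of j] by simp
  then obtain m jm where m: "0 < m" "m < 1" and le: "\<And>k. m * Iinf k \<le> I_lim k"
    and eq: "I_lim jm = m * Iinf jm"
    using I_lim_ratio_min by blast
  have "m * dlap Iinf jm \<le> dlap I_lim jm"
    using le[of "jm - 1"] le[of "jm + 1"] eq unfolding dlap_def by (simp add: algebra_simps)
  then have "m * (lam * dlap Iinf jm) \<le> lam * dlap I_lim jm"
    using lam_pos mult_left_mono by (fastforce simp: mult.left_commute)
  moreover have "lam * dlap Iinf jm = - (f (Iinf jm) + I0 jm)" using Iinf_eq[of jm] by linarith
  ultimately have "- (m * f (Iinf jm)) - m * I0 jm \<le> lam * dlap I_lim jm"
    by (simp add: algebra_simps)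
  moreover have "m * f (Iinf jm) < f (I_lim jm)" using f_mult_gt[OF m Iinf_pos[of jm]] eq by simp
  moreover have "m * I0 jm \<le> I0 jm" using m I0_nonneg[of jm] by (simp add: mult_left_le_one_le)
  ultimately show False using I_lim_stationary[of jm] by linarith
qed

lemma I_eventually_close:
  assumes "0 < e"
  shows "\<forall>\<^sub>F t in at_top. Iinf j - e \<le> I t j"
proof -
  have "\<forall>\<^sub>F n in sequentially. Iinf j - e < I (real n) j"
    using I_lim_tendsto[of j] assms I_lim_eq_Iinf[of j] by (intro order_tendstoD) auto
  then obtain N where N: "Iinf j - e < I (real N) j" using eventually_sequentially by auto
  show ?thesis unfolding eventually_at_top_linorder
  proof (intro exI allI impI)
    fix t assume "real N \<le> t"
    then have "I (real N) j \<le> I t j" by (intro I_mono) auto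
    then show "Iinf j - e \<le> I t j" using N by simp
  qed
qed

lemma I_converges_inside_c_star:
  assumes c: "0 < c" "c < c_star s0 \<tau> \<eta> lam"
  shows "Limsup at_top (\<lambda>t. SUP j\<in>{j. real_of_int \<bar>j\<bar> \<le> c * t}. ereal \<bar>I t j - Iinf j\<bar>) = 0"
proof (rule Limsup_SUP_abs_eq_0)
  have "\<forall>\<^sub>F t in at_top. 0 \<le> (t::real)" by (rule eventually_ge_at_top)
  then show "\<forall>\<^sub>F t in at_top. {j. real_of_int \<bar>j\<bar> \<le> c * t} \<noteq> {}"
    by (rule eventually_mono) (use c in \<open>auto intro!: exI[of _ 0]\<close>)
  fix e :: real assume e: "0 < e"
  obtain R where R: "\<And>j. R \<le> real_of_int \<bar>j\<bar> \<Longrightarrow> Iinf j \<le> v_star + e / 2"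
    using Iinf_tail_le[of "e / 2"] e by auto
  define V where "V = max (v_star / 2) (v_star - e / 2)"
  have V: "0 < V" "V < v_star" "v_star - e / 2 \<le> V" unfolding V_def using v_star e by auto
  obtain T0 J0 where cone: "\<And>t j. T0 \<le> t \<Longrightarrow> J0 \<le> real_of_int \<bar>j\<bar> \<Longrightarrow> real_of_int \<bar>j\<bar> \<le> c * t \<Longrightarrow> V \<le> I t j"
    using I_ge_on_cone[OF V(1,2) c] by blast
  define F where "F = {j::int. real_of_int \<bar>j\<bar> < max R J0}"
  have "F \<subseteq> {- \<lceil>max R J0\<rceil> .. \<lceil>max R J0\<rceil>}" unfolding F_def by (auto simp: abs_less_iff) linarith+
  then have "finite F" by (rule finite_subset) simp
  then have "\<forall>\<^sub>F t in at_top. \<forall>j\<in>F. Iinf j - e \<le> I t j"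
    by (rule eventually_ball_finite) (use I_eventually_close e in auto)
  moreover have "\<forall>\<^sub>F t in at_top. max T0 0 \<le> t" by (rule eventually_ge_at_top)
  ultimately show "\<forall>\<^sub>F t in at_top. \<forall>j\<in>{j. real_of_int \<bar>j\<bar> \<le> c * t}. \<bar>I t j - Iinf j\<bar> \<le> e"
  proof eventually_elim
    case (elim t)
    show ?case
    proof
      fix j assume j: "j \<in> {j. real_of_int \<bar>j\<bar> \<le> c * t}"
      have "Iinf j - e \<le> I t j"
      proof (cases "j \<in> F")
        case False
        then have "V \<le> I t j" "Iinf j \<le> v_star + e / 2"
          using cone[of t j] R[of j] elim j unfolding F_def by auto
        then show ?thesis using V by linarith
      qed (use elim in auto)
      then show "\<bar>I t j - Iinf j\<bar> \<le> e" using I_le_Iinf[of t j] elim by auto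
    qed
  qed
qed

end

theorem theorem3:
  fixes s0 \<tau> \<eta> lam :: real
    and I0 :: "int \<Rightarrow> real"
    and Iinf :: "int \<Rightarrow> real"
    and I :: "real \<Rightarrow> int \<Rightarrow> real"
  assumes s0: "0 < s0" "s0 < 1"
    and pos: "0 < \<tau>" "0 < \<eta>" "0 < lam"
    and I0_fin: "finite {j. I0 j \<noteq> 0}"
    and I0_range: "\<And>j. 0 \<le> I0 j \<and> I0 j < 1"
    and I0_nz: "\<exists>j. 0 < I0 j"
    and R0_gt: "R0 s0 \<tau> \<eta> > 1"
    and Iinf_pos: "\<And>j. 0 < Iinf j"
    and Iinf_bdd: "bounded (range Iinf)"
    and Iinf_eq: "\<And>j. 0 = epi_f s0 \<tau> \<eta> (Iinf j) + I0 j + lam * dlap Iinf j"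
    and I_cont: "\<And>j. continuous_on {0..} (\<lambda>t. I t j)"
    and I_ode: "\<And>j t. t > 0 \<Longrightarrow>
        ((\<lambda>s. I s j) has_real_derivative
           (epi_f s0 \<tau> \<eta> (I t j) + I0 j + lam * dlap (I t) j)) (at t)"
    and I_init: "\<And>j. I 0 j = 0"
    and I_bdd: "\<And>T. bounded {I t j |t j. 0 \<le> t \<and> t \<le> T}"
  shows "(\<forall>c. 0 < c \<and> c < c_star s0 \<tau> \<eta> lam \<longrightarrow>
            Limsup at_top (\<lambda>t. SUP j\<in>{j. real_of_int \<bar>j\<bar> \<le> c * t}. ereal \<bar>I t j - Iinf j\<bar>) = 0)
       \<and> (\<forall>c. c > c_star s0 \<tau> \<eta> lam \<longrightarrow>
            Limsup at_top (\<lambda>t. SUP j\<in>{j. real_of_int \<bar>j\<bar> \<ge> c * t}. ereal \<bar>I t j\<bar>) = 0)"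
proof -
  interpret lattice_epidemic s0 \<tau> \<eta> lam I0 Iinf I
    by unfold_locales (use assms in auto)
  show ?thesis using I_converges_inside_c_star I_vanishes_beyond_c_star by blast
qed

end
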